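(* If $\mathsf{B}\in\mathbb{R}$ and $\alpha<\rho(\mathsf{B})$ is an ordinal, then there is an $\mathsf{A}\in\mathbb{R}$ such that $\mathsf{A}\le\mathsf{B}$ and $\rho(\mathsf{A})=\alpha$.
   Context: Standard generating sets: $\mathrm{Homeo}_+(I)$ acts on $I=[0,1]$ on the right. Support $\mathrm{supt}(f)=\{t:tf\ne t\}$; extended support = interior of its closure; orbitals = components of the support, endpoints = transition points; a bump has exactly one orbital, positive if $tf>t$ there, else negative. A marking assigns to each bump $b$ with support $(u,v)$ a point $s_b\in(u,v)$; feet of $b$: $(u,s_b)$ and $[t_b,v)$ with $t_b=s_bb$ ($b$ positive) or $s_bb^{-1}$ ($b$ negative). A marked function has finitely many bumps, each marked. A finite set of marked functions is fast if no bump occurs in two of its elements and distinct bumps have disjoint feet. A standard function is a marked function whose extended support is an interval, with all positive bumps right of all negative bumps, and #positive $-$ #negative bumps $\in\{0,1\}$. For standard $f,g$: $f\ll g$ iff extended supports disjoint with $f$'s to the left; $f\sqsubset g$ iff closure of extended support of $f$ lies in extended support of $g$; $f<g$ iff $f\ll g$ or $f\sqsubset g$. $f^\circ$: if $f$ has $>2$ orbitals, $f$ restricted to the union of its non-extreme orbitals; if $f$ has 1 or 2 orbitals and the left foot of its positive bump is $(r,s)$, a positive bump with support $(r,s)$. $(f,g)$ is a standard pair if $\{f,g\}$ is fast and either $f\ll g$ or ($f\sqsubset g$ and $(g^\circ,f)$ is a standard pair). $\mathcal{S}$ = finite sets of standard functions, pairwise $<$-comparable, each pair $f<g$ a standard pair.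 Oscillation $o(f,g)$ for $f<g$: number of orbitals of $g$ containing a transition point of $f$. Signatures: the signature of $A\in\mathcal S$ is $(f,g)\mapsto o(f,g)$ on pairs $f<g$; functions on pairs of finite linear orders are equivalent if an order-preserving bijection of bases carries one to the other; $\mathbb{S}$ = signatures of members of $\mathcal S$ up to equivalence. $\mathsf{0},\mathsf{1}$: base sizes $0,1$. $\mathsf{A}+\mathsf{B}$: base $A$ followed by $B$, agreeing with $\mathsf{A},\mathsf{B}$ on their bases, value $0$ across. $\exp(\mathsf{A})$: same base, values $\mathsf{A}(i,j)+1$. Inflation: for $\mathsf{A}$ with base $A$ and $m\in A$, $\mathsf{A}^m$ has base $A\cup\{i^m:i<m,\ \mathsf{A}(i,m)>0\}$, new elements placed above all elements of $A$ below $m$ and below $m$, $i^m<j^m$ iff $i<j$; for $i,j<m\le k$ (with $\mathsf{A}(m,m)=\infty$): $\mathsf{A}^m(i^m,j^m)=\mathsf{A}(i,j)$, $\mathsf{A}^m(i,j^m)=\min(\mathsf{A}(j,m)-1,\mathsf{A}(i,m))$, $\mathsf{A}^m(i^m,k)=\min(\mathsf{A}(i,m),\mathsf{A}(m,k))$, other values as in $\mathsf{A}$. $\mathsf{A}\le\mathsf{B}$ iff there is a sequence $\mathsf{B}_0=\mathsf{B},\dots,\mathsf{B}_n=\mathsf{A}$ with each $\mathsf{B}_{i+1}$ (equivalent to) a restriction to a subset of the base of an inflation of $\mathsf{B}_i$. $\mathbb{B}$: smallest class containing $\mathsf{0},\mathsf{1}$ with $\sum_{i<n}\exp(\mathsf{X}_i)\in\mathbb{B}$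 whenever all $\mathsf{X}_i\in\mathbb{B}$; each nonzero member is uniquely $\sum_{i<n}\exp(\mathsf{A}_i)$ with nonzero $\mathsf{A}_i\in\mathbb{B}$. $\rho(\mathsf{0})=0$, $\rho(\mathsf{1})=1$, $\rho(\exp(\mathsf{A}))=\omega^{-1+\rho(\mathsf{A})}$, $\rho(\sum_{i<n}\exp(\mathsf{A}_i))=\sum_{i<n}\rho(\exp(\mathsf{A}_i))$ (ordinal sum), where $-1+\alpha=\beta$ if $\alpha=1+\beta$ and $\omega^{-1+0}:=0$. $\mathbb{R}$: smallest subclass of $\mathbb{B}$ containing $\mathsf{0},\mathsf{1}$ with $\sum_{i<n}\exp(\mathsf{X}_i)\in\mathbb{R}$ whenever all $\mathsf{X}_i\in\mathbb{R}$ and $\rho(\mathsf{X}_{i+1})\le\rho(\mathsf{X}_i)$ for $i<n-1$. *)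

theory Defs
  imports Main
begin

text \<open>C [e1,...,ek] denotes omega^e1 + ... + omega^ek; it is in normal form
  (ord_valid) iff e1 >= ... >= ek and all ei are in normal form.
  All ordinals rho(A) for A in B are below epsilon_0.\<close>

datatype cnf = C "cnf list"

fun ord_lt :: "cnf \<Rightarrow> cnf \<Rightarrow> bool" where
  "ord_lt (C []) (C []) = False"
| "ord_lt (C []) (C (y # ys)) = True"
| "ord_lt (C (x # xs)) (C []) = False"
| "ord_lt (C (x # xs)) (C (y # ys)) = (ord_lt x y \<or> (x = y \<and> ord_lt (C xs) (C ys)))"

definition ord_le :: "cnf \<Rightarrow> cnf \<Rightarrow> bool" where
  "ord_le a b \<longleftrightarrow> ord_lt a b \<or> a = b"

fun ord_valid :: "cnf \<Rightarrow> bool" where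
  "ord_valid (C xs) = ((\<forall>x\<in>set xs. ord_valid x) \<and> sorted_wrt (\<lambda>a b. ord_le b a) xs)"

definition ord_zero :: cnf where "ord_zero = C []"
definition ord_one :: cnf where "ord_one = C [C []]"

fun ord_add :: "cnf \<Rightarrow> cnf \<Rightarrow> cnf" where
  "ord_add (C xs) (C []) = C xs"
| "ord_add (C xs) (C (y # ys)) = C (filter (\<lambda>x. ord_le y x) xs @ y # ys)"

definition ord_sum :: "cnf list \<Rightarrow> cnf" where
  "ord_sum as = foldl ord_add ord_zero as"

text \<open>-1 + beta: for finite beta = n >= 1 it is n - 1, for infinite beta it is beta.\<close>
definition ord_minus1 :: "cnf \<Rightarrow> cnf" where
  "ord_minus1 b = (case b of C xs \<Rightarrow>
      if xs \<noteq> [] \<and> (\<forall>x\<in>set xs. x = C []) then C (tl xs) else C xs)"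

text \<open>omega^(-1+beta), with omega^(-1+0) := 0.\<close>
definition ord_omexp :: "cnf \<Rightarrow> cnf" where
  "ord_omexp b = (if b = ord_zero then ord_zero else C [ord_minus1 b])"

text \<open>A function on pairs of a finite linear order, represented canonically
  with base {0..<n} (every finite linear order is isomorphic to such);
  only the values f i j with i < j < n are relevant.\<close>

type_synonym sig = "nat \<times> (nat \<Rightarrow> nat \<Rightarrow> nat)"

definition sig_eq :: "sig \<Rightarrow> sig \<Rightarrow> bool" where
  "sig_eq A B \<longleftrightarrow> fst A = fst B \<and> (\<forall>i j. i < j \<and> j < fst A \<longrightarrow> snd A i j = snd B i j)"

definition sig_zero :: sig where "sig_zero = (0, \<lambda>_ _. 0)"
definition sig_one :: sig where "sig_one = (1, \<lambda>_ _. 0)"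

definition sig_plus :: "sig \<Rightarrow> sig \<Rightarrow> sig" where
  "sig_plus A B = (fst A + fst B,
     \<lambda>i j. if j < fst A then snd A i j
           else if fst A \<le> i then snd B (i - fst A) (j - fst A) else 0)"

definition sig_exp :: "sig \<Rightarrow> sig" where
  "sig_exp A = (fst A, \<lambda>i j. snd A i j + 1)"

definition sig_sum :: "sig list \<Rightarrow> sig" where
  "sig_sum As = foldr sig_plus As sig_zero"

text \<open>Positions: 0..<m are the old i < m; m..<m+k are the new
  elements i^m (i ranging increasingly over those i < m with A(i,m) > 0);
  m+k..<n+k are the old elements m..<n.  Inl = old element, Inr i = i^m.\<close>

definition sig_infl :: "sig \<Rightarrow> nat \<Rightarrow> sig" where
  "sig_infl A m = (let n = fst A; f = snd A;
      Cs = filter (\<lambda>i. 0 < f i m) [0..<m]; k = length Cs;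
      pos = (\<lambda>p. if p < m then Inl p else if p < m + k then Inr (Cs ! (p - m)) else Inl (p - k));
      val = (\<lambda>x y. case (x, y) of
               (Inl i, Inl j) \<Rightarrow> f i j
             | (Inr i, Inr j) \<Rightarrow> f i j
             | (Inl i, Inr j) \<Rightarrow> min (f j m - 1) (f i m)
             | (Inr i, Inl j) \<Rightarrow> (if j = m then f i m else min (f i m) (f m j)))
    in (n + k, \<lambda>p q. val (pos p) (pos q)))"

definition sig_restr :: "sig \<Rightarrow> nat set \<Rightarrow> sig" where
  "sig_restr A T = (card T,
     \<lambda>i j. snd A (sorted_list_of_set T ! i) (sorted_list_of_set T ! j))"

definition sig_step :: "sig \<Rightarrow> sig \<Rightarrow> bool" where
  "sig_step B A \<longleftrightarrow> (\<exists>m T. m < fst B \<and> T \<subseteq> {0..<fst (sig_infl B m)}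
       \<and> sig_eq A (sig_restr (sig_infl B m) T))"

definition sig_le :: "sig \<Rightarrow> sig \<Rightarrow> bool" where
  "sig_le A B \<longleftrightarrow> sig_step\<^sup>*\<^sup>* B A"

inductive BB :: "sig \<Rightarrow> bool" where
  BB_zero: "sig_eq X sig_zero \<Longrightarrow> BB X"
| BB_one: "sig_eq X sig_one \<Longrightarrow> BB X"
| BB_sum: "(\<forall>i<length Xs. BB (Xs ! i)) \<Longrightarrow> sig_eq X (sig_sum (map sig_exp Xs)) \<Longrightarrow> BB X"

inductive rho_rel :: "sig \<Rightarrow> cnf \<Rightarrow> bool" where
  rho_zero: "sig_eq X sig_zero \<Longrightarrow> rho_rel X ord_zero"
| rho_one: "sig_eq X sig_one \<Longrightarrow> rho_rel X ord_one"
| rho_sum: "length As = length bs \<Longrightarrow>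
    (\<forall>i<length As. BB (As ! i) \<and> \<not> sig_eq (As ! i) sig_zero \<and> rho_rel (As ! i) (bs ! i)) \<Longrightarrow>
    sig_eq X (sig_sum (map sig_exp As)) \<Longrightarrow>
    rho_rel X (ord_sum (map ord_omexp bs))"

definition rho :: "sig \<Rightarrow> cnf" where
  "rho X = (THE a. rho_rel X a)"

inductive RR :: "sig \<Rightarrow> bool" where
  RR_zero: "sig_eq X sig_zero \<Longrightarrow> RR X"
| RR_one: "sig_eq X sig_one \<Longrightarrow> RR X"
| RR_sum: "(\<forall>i<length Xs. RR (Xs ! i)) \<Longrightarrow>
    (\<forall>i. Suc i < length Xs \<longrightarrow> ord_le (rho (Xs ! Suc i)) (rho (Xs ! i))) \<Longrightarrow>
    sig_eq X (sig_sum (map sig_exp Xs)) \<Longrightarrow> RR X"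

end

theory Submission
  imports Defs
begin

(*
  By induction on the construction of B in R we prove a stronger statement: for any finitely
  many ordinals below rho(B) there are W and a nonempty T with W + T <= B such that each of
  them is rho(A) for some A in R with A <= W.

  Write B as a sum of exp(Y_i) with rho(Y_0) >= rho(Y_1) >= ..., so that
  rho(B) = omega^(-1+rho(Y_0)) + omega^(-1+rho(Y_1)) + ....  An ordinal alpha < rho(B) agrees
  with rho(B) on the first k summands and continues with smaller terms omega^g_j, where
  g_j < -1+rho(Y_k).  Then alpha = rho(exp(Y_0) + ... + exp(Y_(k-1)) + exp(Z_0) + ...) as soon as
  rho(Z_j) = 1 + g_j, and by induction all these Z_j are found below one W with W + T <= Y_k.
  It remains to fit arbitrarily many copies of exp(W) below exp(W + T) <= exp(Y_k): since T is
  nonempty, inflating exp(W + T) at the first element of exp(T) doubles the copies of exp(W).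
*)

lemma sig_eq_refl [simp]: "sig_eq A A"
  by (simp add: sig_eq_def)

lemma sig_eq_sym: "sig_eq A B \<Longrightarrow> sig_eq B A"
  by (simp add: sig_eq_def)

lemma sig_eq_trans [trans]: "sig_eq A B \<Longrightarrow> sig_eq B D \<Longrightarrow> sig_eq A D"
  by (simp add: sig_eq_def)

lemma sig_eq_fst: "sig_eq A B \<Longrightarrow> fst A = fst B"
  by (simp add: sig_eq_def)

lemma sig_eqI:
  "fst A = fst B \<Longrightarrow> (\<And>i j. i < j \<Longrightarrow> j < fst A \<Longrightarrow> snd A i j = snd B i j) \<Longrightarrow> sig_eq A B"
  unfolding sig_eq_def by blast

lemma sig_eqD: "sig_eq A B \<Longrightarrow> i < j \<Longrightarrow> j < fst A \<Longrightarrow> snd A i j = snd B i j"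
  unfolding sig_eq_def by blast

lemma sig_eq_zero_iff: "sig_eq X sig_zero \<longleftrightarrow> fst X = 0"
  by (auto simp: sig_eq_def sig_zero_def)

lemma sig_eq_one_iff: "sig_eq X sig_one \<longleftrightarrow> fst X = 1"
  by (auto simp: sig_eq_def sig_one_def)

lemma fst_sig_zero [simp]: "fst sig_zero = 0"
  by (simp add: sig_zero_def)

lemma fst_sig_plus [simp]: "fst (sig_plus A B) = fst A + fst B"
  by (simp add: sig_plus_def)

lemma snd_sig_plus:
  "snd (sig_plus A B) i j =
     (if j < fst A then snd A i j else if fst A \<le> i then snd B (i - fst A) (j - fst A) else 0)"
  by (simp add: sig_plus_def)

lemma fst_sig_exp [simp]: "fst (sig_exp A) = fst A"
  by (simp add: sig_exp_def)

lemma snd_sig_exp [simp]: "snd (sig_exp A) i j = snd A i j + 1"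
  by (simp add: sig_exp_def)

lemma sig_plus_cong:
  assumes "sig_eq A A'" and "sig_eq B B'"
  shows "sig_eq (sig_plus A B) (sig_plus A' B')"
proof (rule sig_eqI)
  have "fst A' = fst A" "fst B' = fst B"
    using assms by (simp_all add: sig_eq_fst)
  then show "fst (sig_plus A B) = fst (sig_plus A' B')"
    by simp
  fix i j
  assume "i < j" "j < fst (sig_plus A B)"
  with \<open>fst A' = fst A\<close> show "snd (sig_plus A B) i j = snd (sig_plus A' B') i j"
    using sig_eqD[OF assms(1), of i j] sig_eqD[OF assms(2), of "i - fst A" "j - fst A"]
    by (auto simp: snd_sig_plus)
qed

lemma sig_exp_cong: "sig_eq A A' \<Longrightarrow> sig_eq (sig_exp A) (sig_exp A')"
  unfolding sig_eq_def by auto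

lemma sig_plus_assoc: "sig_eq (sig_plus (sig_plus A B) D) (sig_plus A (sig_plus B D))"
  by (rule sig_eqI) (auto simp: snd_sig_plus)

lemma sig_plus_empty_left: "fst Z = 0 \<Longrightarrow> sig_eq (sig_plus Z B) B"
  by (rule sig_eqI) (auto simp: snd_sig_plus)

lemma sig_plus_empty_right: "fst Z = 0 \<Longrightarrow> sig_eq (sig_plus A Z) A"
  by (rule sig_eqI) (auto simp: snd_sig_plus)

lemma sig_sum_Nil [simp]: "sig_sum [] = sig_zero"
  by (simp add: sig_sum_def)

lemma sig_sum_Cons [simp]: "sig_sum (X # Xs) = sig_plus X (sig_sum Xs)"
  by (simp add: sig_sum_def)

lemma fst_sig_sum: "fst (sig_sum Xs) = sum_list (map fst Xs)"
  by (induct Xs) auto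

lemma sig_sum_append: "sig_eq (sig_sum (Xs @ Ys)) (sig_plus (sig_sum Xs) (sig_sum Ys))"
proof (induct Xs)
  case Nil
  show ?case
    by (simp add: sig_eq_sym[OF sig_plus_empty_left])
next
  case (Cons X Xs)
  then have "sig_eq (sig_sum ((X # Xs) @ Ys)) (sig_plus X (sig_plus (sig_sum Xs) (sig_sum Ys)))"
    by (simp add: sig_plus_cong)
  also have "sig_eq \<dots> (sig_plus (sig_sum (X # Xs)) (sig_sum Ys))"
    by (simp add: sig_eq_sym[OF sig_plus_assoc])
  finally show ?case .
qed

section \<open>Inflation\<close>

definition infl_new :: "(nat \<Rightarrow> nat \<Rightarrow> nat) \<Rightarrow> nat \<Rightarrow> nat list" where
  "infl_new f m = filter (\<lambda>i. 0 < f i m) [0..<m]"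

definition infl_pos :: "nat \<Rightarrow> nat list \<Rightarrow> nat \<Rightarrow> nat + nat" where
  "infl_pos m Cs p =
     (if p < m then Inl p else if p < m + length Cs then Inr (Cs ! (p - m)) else Inl (p - length Cs))"

definition infl_val :: "(nat \<Rightarrow> nat \<Rightarrow> nat) \<Rightarrow> nat \<Rightarrow> nat + nat \<Rightarrow> nat + nat \<Rightarrow> nat" where
  "infl_val f m x y = (case (x, y) of
       (Inl i, Inl j) \<Rightarrow> f i j
     | (Inr i, Inr j) \<Rightarrow> f i j
     | (Inl i, Inr j) \<Rightarrow> min (f j m - 1) (f i m)
     | (Inr i, Inl j) \<Rightarrow> (if j = m then f i m else min (f i m) (f m j)))"

lemma sig_infl_unfold:
  "sig_infl (n, f) m =
     (n + length (infl_new f m),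
      \<lambda>p q. infl_val f m (infl_pos m (infl_new f m) p) (infl_pos m (infl_new f m) q))"
  by (simp add: sig_infl_def Let_def infl_new_def infl_pos_def infl_val_def)

lemma infl_val_simps [simp]:
  "infl_val f m (Inl i) (Inl j) = f i j"
  "infl_val f m (Inr i) (Inr j) = f i j"
  "infl_val f m (Inl i) (Inr j) = min (f j m - 1) (f i m)"
  "infl_val f m (Inr i) (Inl j) = (if j = m then f i m else min (f i m) (f m j))"
  by (simp_all add: infl_val_def)

lemma infl_new_less: "a < length (infl_new f m) \<Longrightarrow> infl_new f m ! a < m"
  unfolding infl_new_def using nth_mem by fastforce

lemma infl_new_pos: "a < length (infl_new f m) \<Longrightarrow> 0 < f (infl_new f m ! a) m"
  unfolding infl_new_def using nth_mem by fastforce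

lemma sorted_infl_new: "sorted_wrt (<) (infl_new f m)"
  by (simp add: infl_new_def sorted_wrt_filter)

lemma sig_infl_0: "sig_infl X 0 = X"
  by (cases X) (simp add: sig_infl_unfold infl_new_def infl_pos_def)

lemma sig_infl_cong:
  assumes eq: "sig_eq B B'" and "m < fst B"
  shows "sig_eq (sig_infl B m) (sig_infl B' m)"
proof -
  obtain n f n' g where B: "B = (n, f)" and B': "B' = (n', g)"
    by (cases B, cases B')
  have "n' = n" and fg: "\<And>i j. i < j \<Longrightarrow> j < n \<Longrightarrow> f i j = g i j"
    using eq B B' by (simp_all add: sig_eq_def)
  have "m < n"
    using \<open>m < fst B\<close> B by simp
  define Cs where "Cs = infl_new f m"
  have Cs_g: "infl_new g m = Cs"
    unfolding Cs_def infl_new_def by (rule filter_cong) (use fg \<open>m < n\<close> in auto)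
  have Cs_less: "\<And>a. a < length Cs \<Longrightarrow> Cs ! a < m"
    unfolding Cs_def by (rule infl_new_less)
  have Cs_mono: "\<And>a b. a < b \<Longrightarrow> b < length Cs \<Longrightarrow> Cs ! a < Cs ! b"
    unfolding Cs_def using sorted_infl_new sorted_wrt_nth_less by blast
  show ?thesis
    unfolding B B' \<open>n' = n\<close> sig_infl_unfold Cs_g Cs_def[symmetric]
  proof (rule sig_eqI)
    fix p q
    assume "p < q" and "q < fst (n + length Cs, \<lambda>p q. infl_val f m (infl_pos m Cs p) (infl_pos m Cs q))"
    then show "snd (n + length Cs, \<lambda>p q. infl_val f m (infl_pos m Cs p) (infl_pos m Cs q)) p q =
        snd (n + length Cs, \<lambda>p q. infl_val g m (infl_pos m Cs p) (infl_pos m Cs q)) p q"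
      using Cs_less[of "p - m"] Cs_less[of "q - m"] Cs_mono[of "p - m" "q - m"] \<open>m < n\<close>
        less_trans[OF Cs_less[of "q - m"] \<open>m < n\<close>]
      by (auto simp: infl_pos_def fg intro!: fg)
  qed simp
qed

lemma upt_add_eq_append_map: "[0..<p + m] = [0..<p] @ map ((+) p) [0..<m]"
  by (induct m) auto

lemma infl_new_sig_plus:
  "infl_new (snd (sig_plus P Y)) (fst P + m) = map ((+) (fst P)) (infl_new (snd Y) m)"
proof -
  have e1: "filter (\<lambda>i. 0 < snd (sig_plus P Y) i (fst P + m)) [0..<fst P] = []"
    unfolding filter_empty_conv by (simp add: snd_sig_plus)
  have e2: "filter (\<lambda>i. 0 < snd (sig_plus P Y) i (fst P + m)) (map ((+) (fst P)) [0..<m])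
      = map ((+) (fst P)) (filter (\<lambda>i. 0 < snd Y i m) [0..<m])"
    unfolding filter_map o_def by (simp add: snd_sig_plus)
  show ?thesis unfolding infl_new_def upt_add_eq_append_map filter_append e1 e2 by simp
qed

lemma infl_pos_shift:
  "p \<le> a \<Longrightarrow> infl_pos (p+m) (map ((+) p) Cs) a = map_sum ((+) p) ((+) p) (infl_pos m Cs (a-p))"
  by (auto simp: infl_pos_def)

lemma infl_val_shift:
  assumes "\<And>i j. h (p+i) (p+j) = f i j"
  shows "infl_val h (p+m) (map_sum ((+) p) ((+) p) x) (map_sum ((+) p) ((+) p) y) = infl_val f m x y"
  by (cases x; cases y) (auto simp: assms)

lemma sig_infl_plus_left:
  assumes m: "m < fst Y"
  shows "sig_eq (sig_infl (sig_plus P Y) (fst P + m)) (sig_plus P (sig_infl Y m))"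
proof -
  obtain p g where P: "P = (p,g)" by (cases P)
  obtain n f where Y: "Y = (n,f)" by (cases Y)
  define h where "h = snd (sig_plus P Y)"
  have sp: "sig_plus P (n,f) = (p+n, h)" unfolding h_def by (simp add: prod_eq_iff P Y)
  have hv: "\<And>i j. h i j = (if j < p then g i j else if p \<le> i then f (i - p) (j - p) else 0)"
    unfolding h_def by (simp add: snd_sig_plus P Y)
  have hs: "\<And>i j. h (p+i) (p+j) = f i j" by (simp add: hv)
  define Cs where "Cs = infl_new f m"
  have CsE: "infl_new h (p + m) = map ((+) p) Cs"
    using infl_new_sig_plus[of P Y m] unfolding h_def Cs_def P Y by simp
  define F where "F = (\<lambda>pa q. infl_val h (p + m) (infl_pos (p + m) (map ((+) p) Cs) pa) (infl_pos (p + m) (map ((+) p) Cs) q))"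
  define G where "G = (\<lambda>p q. infl_val f m (infl_pos m Cs p) (infl_pos m Cs q))"
  have key: "F a b = snd (sig_plus P (n + length Cs, G)) a b" if ab: "a < b" for a b
  proof (cases "p \<le> a")
    case True
    then show ?thesis using ab unfolding F_def G_def
      by (simp add: infl_pos_shift infl_val_shift[of h p f, OF hs] snd_sig_plus P)
  next
    case False
    then have "snd (sig_plus P (n + length Cs, G)) a b = (if b < p then g a b else 0)"
      by (simp add: snd_sig_plus P)
    moreover have "infl_pos (p + m) (map ((+) p) Cs) a = Inl a" using False by (simp add: infl_pos_def)
    moreover have "h a (p+m) = 0" using False by (simp add: hv)
    moreover have "b < p \<Longrightarrow> infl_pos (p + m) (map ((+) p) Cs) b = Inl b" by (simp add: infl_pos_def)
    moreover have "\<not> b < p \<Longrightarrow> infl_val h (p+m) (Inl a) (infl_pos (p + m) (map ((+) p) Cs) b) = 0"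
      using False by (auto simp: infl_pos_def hv)
    ultimately show ?thesis unfolding F_def by (auto simp: hv)
  qed
  show ?thesis
    unfolding Y sp sig_infl_unfold
    by (rule sig_eqI) (use key in \<open>auto simp: P CsE F_def G_def Cs_def\<close>)
qed

definition infl_in_range :: "nat \<Rightarrow> nat \<Rightarrow> nat + nat \<Rightarrow> bool" where
  "infl_in_range n m x = (case x of Inl i \<Rightarrow> i < n | Inr i \<Rightarrow> i < m)"

lemma infl_val_agree:
  assumes "\<And>i j. j < n \<Longrightarrow> h i j = f i j" "m < n" "infl_in_range n m x" "infl_in_range n m y"
  shows "infl_val h m x y = infl_val f m x y"
  using assms by (cases x; cases y) (auto simp: infl_in_range_def)

lemma infl_pos_in_range:
  assumes "p < n + length Cs" "\<And>a. a < length Cs \<Longrightarrow> Cs ! a < m" "m < n"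
  shows "infl_in_range n m (infl_pos m Cs p)"
  using assms by (auto simp: infl_pos_def infl_in_range_def)

lemma sig_infl_plus_right:
  assumes m: "m < fst Y"
  shows "sig_eq (sig_infl (sig_plus Y Q) m) (sig_plus (sig_infl Y m) Q)"
proof -
  obtain q g where Q: "Q = (q,g)" by (cases Q)
  obtain n f where Y: "Y = (n,f)" by (cases Y)
  define h where "h = snd (sig_plus (n,f) Q)"
  have sp: "sig_plus (n,f) Q = (n+q, h)" unfolding h_def by (simp add: prod_eq_iff Q)
  have hv: "\<And>i j. h i j = (if j < n then f i j else if n \<le> i then g (i - n) (j - n) else 0)"
    unfolding h_def by (simp add: snd_sig_plus Q)
  have mn: "m < n" using m Y by simp
  define Cs where "Cs = infl_new f m"
  have CsE: "infl_new h m = Cs" unfolding Cs_def infl_new_def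
    by (rule filter_cong) (use mn in \<open>auto simp: hv\<close>)
  have cl: "\<And>a. a < length Cs \<Longrightarrow> Cs ! a < m" unfolding Cs_def by (rule infl_new_less)
  define G where "G = (\<lambda>p q. infl_val f m (infl_pos m Cs p) (infl_pos m Cs q))"
  have key: "infl_val h m (infl_pos m Cs a) (infl_pos m Cs b) = snd (sig_plus (n + length Cs, G) Q) a b"
    if ab: "a < b" for a b
  proof -
    consider "b < n + length Cs" | "n + length Cs \<le> a" | "a < n + length Cs" "n + length Cs \<le> b"
      using ab by linarith
    then show ?thesis
    proof cases
      case 1
      then show ?thesis using ab infl_val_agree[of n h f m, OF _ mn infl_pos_in_range infl_pos_in_range] cl mn hv
        by (simp add: snd_sig_plus G_def Q)
    next
      case 2
      have "infl_pos m Cs a = Inl (a - length Cs)" "infl_pos m Cs b = Inl (b - length Cs)"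
        using 2 ab mn by (auto simp: infl_pos_def)
      moreover have "h (a - length Cs) (b - length Cs) = g (a - (n + length Cs)) (b - (n + length Cs))"
      proof -
        have x: "n \<le> a - length Cs" "\<not> b - length Cs < n" using 2 ab by auto
        show ?thesis using hv[of "a - length Cs" "b - length Cs"] x by (simp add: add.commute diff_diff_add)
      qed
      ultimately show ?thesis using 2 ab by (simp add: snd_sig_plus Q)
    next
      case 3
      have ib: "infl_pos m Cs b = Inl (b - length Cs)" using 3 mn by (simp add: infl_pos_def)
      have "infl_val h m (infl_pos m Cs a) (Inl (b - length Cs)) = 0"
        using 3 mn cl by (auto simp: infl_pos_def hv)
      then show ?thesis using 3 ib by (simp add: snd_sig_plus Q)
    qed
  qed
  show ?thesis
    unfolding Y sp sig_infl_unfold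
    by (rule sig_eqI) (use key in \<open>auto simp: Q CsE G_def Cs_def\<close>)
qed

definition sig_restr_list :: "sig \<Rightarrow> nat list \<Rightarrow> sig" where
  "sig_restr_list X L = (length L, \<lambda>i j. snd X (L ! i) (L ! j))"

lemma fst_sig_restr_list [simp]: "fst (sig_restr_list X L) = length L"
  by (simp add: sig_restr_list_def)

lemma snd_sig_restr_list: "snd (sig_restr_list X L) i j = snd X (L ! i) (L ! j)"
  by (simp add: sig_restr_list_def)

lemma sig_restr_set: "sorted_wrt (<) L \<Longrightarrow> sig_restr X (set L) = sig_restr_list X L"
  unfolding sig_restr_def sig_restr_list_def
  by (simp add: sorted_list_of_set.idem_if_sorted_distinct distinct_card strict_sorted_iff)

lemma sig_restr_list_cong:
  assumes "sig_eq X X'" "sorted_wrt (<) L" "set L \<subseteq> {0..<fst X}"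
  shows "sig_eq (sig_restr_list X L) (sig_restr_list X' L)"
  using assms unfolding sig_eq_def sig_restr_list_def
  by (auto simp: sorted_wrt_nth_less subset_iff)

lemma sig_restr_list_plus_left:
  "sig_eq (sig_restr_list (sig_plus P Y) ([0..<fst P] @ map ((+) (fst P)) L)) (sig_plus P (sig_restr_list Y L))"
proof (rule sig_eqI)
  show "fst (sig_restr_list (sig_plus P Y) ([0..<fst P] @ map ((+) (fst P)) L)) = fst (sig_plus P (sig_restr_list Y L))"
    by simp
  fix a b assume ab: "a < b" "b < fst (sig_restr_list (sig_plus P Y) ([0..<fst P] @ map ((+) (fst P)) L))"
  then have b: "b < fst P + length L" by simp
  show "snd (sig_restr_list (sig_plus P Y) ([0..<fst P] @ map ((+) (fst P)) L)) a b = snd (sig_plus P (sig_restr_list Y L)) a b"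
  proof (cases "b < fst P")
    case True
    then show ?thesis
      using ab by (simp add: snd_sig_restr_list snd_sig_plus nth_append)
  next
    case False
    then show ?thesis using ab b by (auto simp: snd_sig_restr_list snd_sig_plus nth_append)
  qed
qed

lemma sig_restr_list_plus_right:
  assumes "set L \<subseteq> {0..<fst Y}"
  shows "sig_eq (sig_restr_list (sig_plus Y Q) (L @ map ((+) (fst Y)) [0..<fst Q])) (sig_plus (sig_restr_list Y L) Q)"
proof (rule sig_eqI)
  show "fst (sig_restr_list (sig_plus Y Q) (L @ map ((+) (fst Y)) [0..<fst Q])) = fst (sig_plus (sig_restr_list Y L) Q)"
    by simp
  fix a b assume ab: "a < b" "b < fst (sig_restr_list (sig_plus Y Q) (L @ map ((+) (fst Y)) [0..<fst Q]))"
  then have b: "b < length L + fst Q" by simp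
  have Ln: "\<And>i. i < length L \<Longrightarrow> L ! i < fst Y" using assms nth_mem by fastforce
  show "snd (sig_restr_list (sig_plus Y Q) (L @ map ((+) (fst Y)) [0..<fst Q])) a b = snd (sig_plus (sig_restr_list Y L) Q) a b"
  proof (cases "b < length L")
    case True
    then show ?thesis
      using ab Ln[of a] Ln[of b] by (simp add: snd_sig_restr_list snd_sig_plus nth_append)
  next
    case False
    then show ?thesis using ab b Ln[of a] by (auto simp: snd_sig_restr_list snd_sig_plus nth_append)
  qed
qed

lemma sorted_upt_append_shift: "sorted_wrt (<) L \<Longrightarrow> sorted_wrt (<) ([0..<p] @ map ((+) (p::nat)) L)"
  by (auto simp: sorted_wrt_append sorted_wrt_map sorted_wrt_upt)

lemma sorted_append_shift_upt: "sorted_wrt (<) L \<Longrightarrow> set L \<subseteq> {0..<n} \<Longrightarrow>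
   sorted_wrt (<) (L @ map ((+) (n::nat)) [0..<q])"
  by (auto simp: sorted_wrt_append sorted_wrt_map sorted_wrt_upt)

lemma sig_restr_list_exp: "sig_restr_list (sig_exp X) L = sig_exp (sig_restr_list X L)"
  by (simp add: sig_restr_list_def sig_exp_def)

lemma infl_new_exp: "infl_new (\<lambda>i j. Suc (f i j)) m = [0..<m]"
  by (simp add: infl_new_def)

lemma infl_val_Suc:
  assumes "\<And>j. y = Inr j \<Longrightarrow> 0 < f j m"
  shows "infl_val (\<lambda>i j. Suc (f i j)) m x y = Suc (infl_val f m x y)"
  using assms by (cases x; cases y) auto

lemma infl_pos_embed:
  assumes "sorted_wrt (<) Cs" and Cs: "\<And>a. a < length Cs \<Longrightarrow> Cs ! a < m" and "m < n"
  defines "L \<equiv> [0..<m] @ map ((+) m) Cs @ map ((+) (2 * m)) [0..<n - m]"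
  shows "sorted_wrt (<) L" and "set L \<subseteq> {0..<n + m}" and "length L = n + length Cs"
    and "\<And>p. p < n + length Cs \<Longrightarrow> infl_pos m [0..<m] (L ! p) = infl_pos m Cs p"
proof -
  have "c < m" if "c \<in> set Cs" for c
    using that Cs by (auto simp: in_set_conv_nth)
  then show "sorted_wrt (<) L" and "set L \<subseteq> {0..<n + m}" and "length L = n + length Cs"
    using assms(1,3) by (force simp: L_def sorted_wrt_append sorted_wrt_map sorted_wrt_upt)+
  fix p
  assume "p < n + length Cs"
  consider "p < m" | "m \<le> p" "p < m + length Cs" | "m + length Cs \<le> p"
    by linarith
  then show "infl_pos m [0..<m] (L ! p) = infl_pos m Cs p"
  proof cases
    case 1
    then show ?thesis
      by (simp add: L_def nth_append infl_pos_def)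
  next
    case 2
    then have "L ! p = m + Cs ! (p - m)"
      by (simp add: L_def nth_append less_diff_conv2)
    then show ?thesis
      using 2 Cs[of "p - m"] by (simp add: infl_pos_def)
  next
    case 3
    then have "\<not> p < m" and "\<not> p - m < length Cs"
      by linarith+
    then have "L ! p = 2 * m + (p - m - length Cs)"
      using \<open>p < n + length Cs\<close> \<open>m < n\<close> by (simp add: L_def nth_append)
    then show ?thesis
      using 3 by (simp add: infl_pos_def)
  qed
qed

text \<open>In \<open>exp X\<close> every \<open>i < m\<close> receives a copy \<open>i\<^sup>m\<close>; keeping only the copies of those \<open>i\<close>
  with \<open>X(i,m) > 0\<close> recovers \<open>exp\<close> of the inflation of \<open>X\<close>.\<close>

lemma sig_infl_exp:
  assumes "m < fst X"
  shows "\<exists>L. sorted_wrt (<) L \<and> set L \<subseteq> {0..<fst (sig_infl (sig_exp X) m)} \<and>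
     sig_eq (sig_exp (sig_infl X m)) (sig_restr_list (sig_infl (sig_exp X) m) L)"
proof -
  obtain n f where X: "X = (n, f)"
    by (cases X)
  have "m < n"
    using assms X by simp
  define Cs where "Cs = infl_new f m"
  define L where "L = [0..<m] @ map ((+) m) Cs @ map ((+) (2 * m)) [0..<n - m]"
  have "sorted_wrt (<) Cs" and "\<And>a. a < length Cs \<Longrightarrow> Cs ! a < m"
    unfolding Cs_def by (rule sorted_infl_new, rule infl_new_less)
  note L = infl_pos_embed[OF this \<open>m < n\<close>, folded L_def]
  have exp_infl: "sig_infl (sig_exp (n, f)) m =
      (n + m, \<lambda>p q. infl_val (\<lambda>i j. Suc (f i j)) m (infl_pos m [0..<m] p) (infl_pos m [0..<m] q))"
    by (simp add: sig_exp_def sig_infl_unfold infl_new_exp)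
  have "snd (sig_exp (sig_infl X m)) p q = snd (sig_restr_list (sig_infl (sig_exp X) m) L) p q"
    if "p < q" and "q < n + length Cs" for p q
  proof -
    have "0 < f j m" if "infl_pos m Cs q = Inr j" for j
      using that infl_new_pos[of "q - m" f m] unfolding infl_pos_def Cs_def by (auto split: if_splits)
    then show ?thesis
      using that L(4)[of p] L(4)[of q]
      by (simp add: exp_infl X sig_infl_unfold snd_sig_restr_list infl_val_Suc Cs_def[symmetric])
  qed
  then have "sig_eq (sig_exp (sig_infl X m)) (sig_restr_list (sig_infl (sig_exp X) m) L)"
    using L(3) by (intro sig_eqI) (auto simp: X sig_infl_unfold Cs_def)
  then show ?thesis
    using L(1,2) exp_infl by (auto simp: X)
qed

lemma sig_stepI:
  assumes "m < fst B" and "sorted_wrt (<) L" and "set L \<subseteq> {0..<fst (sig_infl B m)}"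
    and "sig_eq A (sig_restr_list (sig_infl B m) L)"
  shows "sig_step B A"
  unfolding sig_step_def using assms by (metis sig_restr_set)

lemma sig_stepE:
  assumes "sig_step Z W"
  obtains m L where "m < fst Z" and "sorted_wrt (<) L" and "set L \<subseteq> {0..<fst (sig_infl Z m)}"
    and "sig_eq W (sig_restr_list (sig_infl Z m) L)"
proof -
  obtain m T where "m < fst Z" and T: "T \<subseteq> {0..<fst (sig_infl Z m)}"
    and "sig_eq W (sig_restr (sig_infl Z m) T)"
    using assms unfolding sig_step_def by blast
  moreover have "finite T"
    using T finite_subset by blast
  ultimately show ?thesis
    using that[of m "sorted_list_of_set T"] sig_restr_set[of "sorted_list_of_set T"] by simp
qed

lemma sig_step_cong:
  assumes "sig_step B A" and "sig_eq B B'"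
  shows "sig_step B' A"
proof -
  obtain m L where "m < fst B" and L: "sorted_wrt (<) L" "set L \<subseteq> {0..<fst (sig_infl B m)}"
    and A: "sig_eq A (sig_restr_list (sig_infl B m) L)"
    using assms(1) by (rule sig_stepE)
  have infl: "sig_eq (sig_infl B m) (sig_infl B' m)"
    using assms(2) \<open>m < fst B\<close> by (rule sig_infl_cong)
  show ?thesis
  proof (rule sig_stepI)
    show "m < fst B'"
      using \<open>m < fst B\<close> sig_eq_fst[OF assms(2)] by simp
    show "set L \<subseteq> {0..<fst (sig_infl B' m)}"
      using L(2) sig_eq_fst[OF infl] by simp
    show "sig_eq A (sig_restr_list (sig_infl B' m) L)"
      using A sig_restr_list_cong[OF infl L] by (rule sig_eq_trans)
  qed (fact L)
qed

lemma sig_le_cong: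
  assumes "sig_le A B" and "sig_eq B B'"
  shows "\<exists>A'. sig_eq A A' \<and> sig_le A' B'"
  using assms(1)[unfolded sig_le_def]
proof (cases rule: converse_rtranclpE)
  case base
  then show ?thesis
    using assms(2) unfolding sig_le_def by (intro exI[of _ B']) simp
next
  case (step Z)
  then have "sig_step\<^sup>*\<^sup>* B' A"
    using sig_step_cong[OF _ assms(2)] converse_rtranclp_into_rtranclp by metis
  then show ?thesis
    unfolding sig_le_def by (intro exI[of _ A]) simp
qed

definition sig_below :: "sig \<Rightarrow> sig \<Rightarrow> bool" where
  "sig_below A B \<longleftrightarrow> (\<exists>A'. sig_eq A A' \<and> sig_le A' B)"

lemma sig_below_refl [simp]: "sig_below A A"
  unfolding sig_below_def sig_le_def by (intro exI[of _ A]) simp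

lemma sig_eq_imp_sig_below: "sig_eq A B \<Longrightarrow> sig_below A B"
  unfolding sig_below_def sig_le_def by (intro exI[of _ B]) simp

lemma sig_below_trans [trans]: "sig_below A B \<Longrightarrow> sig_below B D \<Longrightarrow> sig_below A D"
proof -
  assume "sig_below A B" and "sig_below B D"
  then obtain A1 B1 where "sig_eq A A1" "sig_le A1 B" and "sig_eq B B1" "sig_le B1 D"
    unfolding sig_below_def by blast
  moreover obtain A2 where "sig_eq A1 A2" "sig_le A2 B1"
    using sig_le_cong \<open>sig_le A1 B\<close> \<open>sig_eq B B1\<close> by blast
  ultimately show "sig_below A D"
    unfolding sig_below_def sig_le_def using sig_eq_trans by (meson rtranclp_trans)
qed

lemma sig_eq_sig_below_trans [trans]: "sig_eq A B \<Longrightarrow> sig_below B D \<Longrightarrow> sig_below A D"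
  using sig_eq_imp_sig_below sig_below_trans by blast

lemma sig_below_sig_eq_trans [trans]: "sig_below A B \<Longrightarrow> sig_eq B D \<Longrightarrow> sig_below A D"
  using sig_eq_imp_sig_below sig_below_trans by blast

lemma sig_step_imp_sig_below: "sig_step B A \<Longrightarrow> sig_below A B"
  unfolding sig_below_def sig_le_def by (intro exI[of _ A]) auto

lemma sig_infl_below:
  assumes "m < fst X"
  shows "sig_below (sig_infl X m) X"
proof -
  let ?L = "[0..<fst (sig_infl X m)]"
  have "sig_eq (sig_infl X m) (sig_restr_list (sig_infl X m) ?L)"
    by (simp add: sig_restr_list_def sig_eq_def)
  then show ?thesis
    using assms by (intro sig_step_imp_sig_below sig_stepI[of m X ?L]) (auto simp: sorted_wrt_upt)
qed

lemma sig_restr_list_below: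
  assumes "sorted_wrt (<) L" and "set L \<subseteq> {0..<fst X}"
  shows "sig_below (sig_restr_list X L) X"
proof (cases "fst X = 0")
  case True
  then have "L = []"
    using assms(2) by auto
  with True show ?thesis
    by (intro sig_eq_imp_sig_below) (simp add: sig_eq_def sig_restr_list_def)
next
  case False
  with assms show ?thesis
    by (intro sig_step_imp_sig_below sig_stepI[of 0 X L]) (auto simp: sig_infl_0)
qed

lemma sig_restr_list_below_cong:
  assumes "sig_eq A A'" and "sorted_wrt (<) L" and "set L \<subseteq> {0..<fst A}"
  shows "sig_below (sig_restr_list A L) A'"
proof -
  have "sig_eq (sig_restr_list A L) (sig_restr_list A' L)"
    using assms by (rule sig_restr_list_cong)
  moreover have "sig_below (sig_restr_list A' L) A'"
    using assms sig_eq_fst by (metis sig_restr_list_below)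
  ultimately show ?thesis
    using sig_eq_sig_below_trans by blast
qed

text \<open>A signature equivalent to \<open>B\<close> is below \<open>B\<close> in the sense of \<^const>\<open>sig_le\<close> only via a step,
  which needs a position of \<open>B\<close> to inflate at (inflating at \<open>0\<close> changes nothing).\<close>

lemma sig_below_imp_sig_le:
  assumes "sig_below A B" and "0 < fst B"
  shows "sig_le A B"
proof -
  obtain A' where A': "sig_eq A A'" and "sig_le A' B"
    using assms(1) unfolding sig_below_def by blast
  from this(2)[unfolded sig_le_def] show ?thesis
  proof (cases rule: rtranclp.cases)
    case rtrancl_refl
    have "sig_eq B (sig_restr_list (sig_infl B 0) [0..<fst B])"
      by (simp add: sig_infl_0 sig_restr_list_def sig_eq_def)
    then have "sig_step B A"
      using A' rtrancl_refl assms(2)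
      by (intro sig_stepI[of 0 B "[0..<fst B]"]) (auto simp: sorted_wrt_upt sig_infl_0 intro: sig_eq_trans)
    then show ?thesis
      unfolding sig_le_def by auto
  next
    case (rtrancl_into_rtrancl Z)
    then have "sig_step Z A"
      unfolding sig_step_def using A' sig_eq_trans by blast
    with rtrancl_into_rtrancl show ?thesis
      unfolding sig_le_def by auto
  qed
qed

lemma sig_below_empty:
  assumes "sig_below A B" and "fst B = 0"
  shows "fst A = 0"
proof -
  obtain A' where "sig_eq A A'" and "sig_step\<^sup>*\<^sup>* B A'"
    using assms(1) unfolding sig_below_def sig_le_def by blast
  moreover from \<open>sig_step\<^sup>*\<^sup>* B A'\<close> have "A' = B"
  proof (cases rule: converse_rtranclpE)
    case (step Z)
    then show ?thesis
      using assms(2) unfolding sig_step_def by simp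
  qed simp
  ultimately show ?thesis
    using assms(2) sig_eq_fst by metis
qed

definition sig_prefix :: "nat \<Rightarrow> sig \<Rightarrow> sig" where
  "sig_prefix k X = (k, snd X)"

lemma sig_prefix_below:
  assumes "k \<le> fst X"
  shows "sig_below (sig_prefix k X) X"
proof -
  have "sig_eq (sig_prefix k X) (sig_restr_list X [0..<k])"
    by (simp add: sig_restr_list_def sig_prefix_def sig_eq_def)
  then show ?thesis
    using assms sig_restr_list_below[of "[0..<k]" X] sig_eq_sig_below_trans by (auto simp: sorted_wrt_upt)
qed

lemma sig_below_preserved:
  assumes step: "\<And>Z W. sig_step Z W \<Longrightarrow> sig_below (F W) (F Z)"
    and cong: "\<And>A B. sig_eq A B \<Longrightarrow> sig_eq (F A) (F B)"
    and "sig_below Y X"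
  shows "sig_below (F Y) (F X)"
proof -
  obtain Y' where "sig_eq Y Y'" and "sig_step\<^sup>*\<^sup>* X Y'"
    using assms(3) unfolding sig_below_def sig_le_def by blast
  from \<open>sig_step\<^sup>*\<^sup>* X Y'\<close> have "sig_below (F Y') (F X)"
  proof (induction rule: rtranclp_induct)
    case (step Z W)
    then show ?case
      using assms(1) sig_below_trans by blast
  qed simp
  then show ?thesis
    using cong[OF \<open>sig_eq Y Y'\<close>] sig_eq_sig_below_trans by blast
qed

lemma sig_plus_left_mono: "sig_below Y X \<Longrightarrow> sig_below (sig_plus P Y) (sig_plus P X)"
proof (rule sig_below_preserved[where F = "sig_plus P"])
  fix Z W
  assume "sig_step Z W"
  then obtain m L where m: "m < fst Z" and L: "sorted_wrt (<) L" "set L \<subseteq> {0..<fst (sig_infl Z m)}"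
    and W: "sig_eq W (sig_restr_list (sig_infl Z m) L)"
    by (rule sig_stepE)
  let ?L = "[0..<fst P] @ map ((+) (fst P)) L"
  have "sig_eq (sig_plus P W) (sig_plus P (sig_restr_list (sig_infl Z m) L))"
    using W by (simp add: sig_plus_cong)
  also have "sig_eq \<dots> (sig_restr_list (sig_plus P (sig_infl Z m)) ?L)"
    by (rule sig_eq_sym[OF sig_restr_list_plus_left])
  also have "sig_below \<dots> (sig_infl (sig_plus P Z) (fst P + m))"
    using L by (intro sig_restr_list_below_cong sig_eq_sym[OF sig_infl_plus_left[OF m]] sorted_upt_append_shift)
      auto
  also have "sig_below \<dots> (sig_plus P Z)"
    using m by (intro sig_infl_below) simp
  finally show "sig_below (sig_plus P W) (sig_plus P Z)" .
qed (simp add: sig_plus_cong)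

lemma sig_plus_right_mono: "sig_below Y X \<Longrightarrow> sig_below (sig_plus Y Q) (sig_plus X Q)"
proof (rule sig_below_preserved[where F = "\<lambda>A. sig_plus A Q"])
  fix Z W
  assume "sig_step Z W"
  then obtain m L where m: "m < fst Z" and L: "sorted_wrt (<) L" "set L \<subseteq> {0..<fst (sig_infl Z m)}"
    and W: "sig_eq W (sig_restr_list (sig_infl Z m) L)"
    by (rule sig_stepE)
  let ?L = "L @ map ((+) (fst (sig_infl Z m))) [0..<fst Q]"
  have "sig_eq (sig_plus W Q) (sig_plus (sig_restr_list (sig_infl Z m) L) Q)"
    using W by (simp add: sig_plus_cong)
  also have "sig_eq \<dots> (sig_restr_list (sig_plus (sig_infl Z m) Q) ?L)"
    by (rule sig_eq_sym[OF sig_restr_list_plus_right[OF L(2)]])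
  also have "sig_below \<dots> (sig_infl (sig_plus Z Q) m)"
    using L by (intro sig_restr_list_below_cong sig_eq_sym[OF sig_infl_plus_right[OF m]] sorted_append_shift_upt)
      auto
  also have "sig_below \<dots> (sig_plus Z Q)"
    using m by (intro sig_infl_below) simp
  finally show "sig_below (sig_plus W Q) (sig_plus Z Q)" .
qed (simp add: sig_plus_cong)

lemma sig_plus_mono: "sig_below A A' \<Longrightarrow> sig_below B B' \<Longrightarrow> sig_below (sig_plus A B) (sig_plus A' B')"
  using sig_plus_left_mono sig_plus_right_mono sig_below_trans by blast

lemma sig_exp_mono: "sig_below Y X \<Longrightarrow> sig_below (sig_exp Y) (sig_exp X)"
proof (rule sig_below_preserved[where F = sig_exp])
  fix Z W
  assume "sig_step Z W"
  then obtain m L where m: "m < fst Z" and L: "sorted_wrt (<) L" "set L \<subseteq> {0..<fst (sig_infl Z m)}"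
    and W: "sig_eq W (sig_restr_list (sig_infl Z m) L)"
    by (rule sig_stepE)
  obtain L' where L': "sorted_wrt (<) L'" "set L' \<subseteq> {0..<fst (sig_infl (sig_exp Z) m)}"
    and exp_infl: "sig_eq (sig_exp (sig_infl Z m)) (sig_restr_list (sig_infl (sig_exp Z) m) L')"
    using sig_infl_exp[OF m] by blast
  have "sig_eq (sig_exp W) (sig_restr_list (sig_exp (sig_infl Z m)) L)"
    using W by (simp add: sig_exp_cong sig_restr_list_exp)
  also have "sig_below \<dots> (sig_restr_list (sig_infl (sig_exp Z) m) L')"
    using L by (intro sig_restr_list_below_cong[OF exp_infl]) simp_all
  also have "sig_below \<dots> (sig_infl (sig_exp Z) m)"
    using L' by (rule sig_restr_list_below)
  also have "sig_below \<dots> (sig_exp Z)"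
    using m by (intro sig_infl_below) simp
  finally show "sig_below (sig_exp W) (sig_exp Z)" .
qed (simp add: sig_exp_cong)

lemma sig_sum_mono: "list_all2 sig_below As Bs \<Longrightarrow> sig_below (sig_sum As) (sig_sum Bs)"
  by (induct rule: list_all2_induct) (auto simp: sig_plus_mono)

lemma sig_below_plus_self: "sig_below A (sig_plus A B)"
proof -
  have "sig_eq A (sig_prefix (fst A) (sig_plus A B))"
    by (rule sig_eqI) (auto simp: sig_prefix_def snd_sig_plus)
  then show ?thesis
    using sig_prefix_below[of "fst A" "sig_plus A B"] sig_eq_sig_below_trans by simp
qed

lemma sig_sum_split_below:
  assumes "K < length Xs" and "sig_below (sig_plus W T) (Xs ! K)"
  shows "sig_below (sig_plus (sig_plus (sig_sum (take K Xs)) W) (sig_plus T (sig_sum (drop (Suc K) Xs))))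
           (sig_sum Xs)"
proof -
  let ?P = "sig_sum (take K Xs)" and ?R = "sig_sum (drop (Suc K) Xs)"
  have "sig_eq (sig_plus (sig_plus ?P W) (sig_plus T ?R)) (sig_plus ?P (sig_plus W (sig_plus T ?R)))"
    by (rule sig_plus_assoc)
  also have "sig_eq \<dots> (sig_plus ?P (sig_plus (sig_plus W T) ?R))"
    by (rule sig_plus_cong[OF sig_eq_refl sig_eq_sym[OF sig_plus_assoc]])
  also have "sig_below \<dots> (sig_plus ?P (sig_plus (Xs ! K) ?R))"
    using assms(2) by (intro sig_plus_left_mono sig_plus_right_mono)
  also have "sig_eq \<dots> (sig_sum (take K Xs @ Xs ! K # drop (Suc K) Xs))"
    by (rule sig_eq_sym) (use sig_sum_append[of "take K Xs" "Xs ! K # drop (Suc K) Xs"] in simp)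
  also have "take K Xs @ Xs ! K # drop (Suc K) Xs = Xs"
    using assms(1) by (simp add: id_take_nth_drop[symmetric])
  finally show ?thesis .
qed

lemma sig_sum_take_below:
  assumes "k < K" and "K \<le> length Xs" and "sig_below W (Xs ! k)"
  shows "sig_below (sig_plus (sig_sum (take k Xs)) W) (sig_plus (sig_sum (take K Xs)) V)"
proof -
  let ?P = "sig_sum (take k Xs)" and ?R = "sig_sum (take (K - Suc k) (drop (Suc k) Xs))"
  have "take K Xs = take k Xs @ take (K - k) (drop k Xs)"
    using assms(1) take_add[of k "K - k" Xs] by simp
  also have "\<dots> = take k Xs @ take (Suc (K - Suc k)) (Xs ! k # drop (Suc k) Xs)"
    using assms(1,2) by (simp add: Cons_nth_drop_Suc Suc_diff_Suc)
  finally have split: "take K Xs = take k Xs @ Xs ! k # take (K - Suc k) (drop (Suc k) Xs)"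
    by simp
  have "sig_below (sig_plus ?P W) (sig_plus ?P (Xs ! k))"
    using assms(3) by (rule sig_plus_left_mono)
  also have "sig_below \<dots> (sig_plus ?P (sig_plus (Xs ! k) ?R))"
    by (rule sig_plus_left_mono[OF sig_below_plus_self])
  also have "sig_eq \<dots> (sig_sum (take K Xs))"
    unfolding split
    by (rule sig_eq_sym) (use sig_sum_append[of "take k Xs" "Xs ! k # take (K - Suc k) (drop (Suc k) Xs)"] in simp)
  also have "sig_below \<dots> (sig_plus (sig_sum (take K Xs)) V)"
    by (rule sig_below_plus_self)
  finally show ?thesis .
qed

lemma sig_sum_take_plus_mono:
  assumes "k \<le> K" and "K < length Xs" and "\<And>j. j < length Xs \<Longrightarrow> sig_below (W j) (Xs ! j)"
  shows "sig_below (sig_plus (sig_sum (take k Xs)) (W k)) (sig_plus (sig_sum (take K Xs)) (W K))"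
proof (cases "k = K")
  case False
  with assms show ?thesis
    by (intro sig_sum_take_below) auto
qed simp

section \<open>Many copies of \<open>exp W\<close> below \<open>exp (W + T)\<close>\<close>

text \<open>Like \<^const>\<open>sig_plus\<close>, but with value \<open>1\<close> across the two parts; by
  \<open>sig_exp_plus_eq_glue\<close> below, \<open>exp (W + T)\<close> is \<open>exp W\<close> glued to \<open>exp T\<close>.\<close>

definition sig_glue :: "sig \<Rightarrow> sig \<Rightarrow> sig" where
  "sig_glue Q S = (fst Q + fst S, \<lambda>i j. if j < fst Q then snd Q i j
       else if fst Q \<le> i then snd S (i - fst Q) (j - fst Q) else 1)"

lemma fst_sig_glue [simp]: "fst (sig_glue Q S) = fst Q + fst S"
  by (simp add: sig_glue_def)

lemma snd_sig_glue:
  "snd (sig_glue Q S) i j =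
     (if j < fst Q then snd Q i j else if fst Q \<le> i then snd S (i - fst Q) (j - fst Q) else 1)"
  by (simp add: sig_glue_def)

lemma sig_glue_cong:
  assumes "sig_eq Q Q'"
  shows "sig_eq (sig_glue Q S) (sig_glue Q' S)"
proof (rule sig_eqI)
  have "fst Q' = fst Q"
    using assms sig_eq_fst by metis
  then show "fst (sig_glue Q S) = fst (sig_glue Q' S)"
    by simp
  fix i j
  assume "i < j" "j < fst (sig_glue Q S)"
  then show "snd (sig_glue Q S) i j = snd (sig_glue Q' S) i j"
    using sig_eqD[OF assms] \<open>fst Q' = fst Q\<close> by (simp add: snd_sig_glue)
qed

lemma sig_below_glue_self: "sig_below Q (sig_glue Q S)"
proof -
  have "sig_eq Q (sig_prefix (fst Q) (sig_glue Q S))"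
    by (rule sig_eqI) (auto simp: sig_prefix_def snd_sig_glue)
  then show ?thesis
    using sig_prefix_below[of "fst Q" "sig_glue Q S"] sig_eq_sig_below_trans by simp
qed

lemma sig_exp_plus_eq_glue: "sig_eq (sig_exp (sig_plus W T)) (sig_glue (sig_exp W) (sig_exp T))"
  by (rule sig_eqI) (auto simp: snd_sig_glue snd_sig_plus)

lemma infl_new_glue: "infl_new (snd (sig_glue Q S)) (fst Q) = [0..<fst Q]"
  unfolding infl_new_def by (simp add: snd_sig_glue)

text \<open>The doubling step: every element of \<open>Q\<close> has value \<open>1\<close> to the first element of \<open>exp T\<close>, so
  inflating there inserts a full copy of \<open>Q\<close>, with value \<open>min (1 - 1) _ = 0\<close> to the original.\<close>

lemma sig_infl_glue:
  assumes T: "0 < fst T"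
  shows "sig_eq (sig_infl (sig_glue Q (sig_exp T)) (fst Q)) (sig_glue (sig_plus Q Q) (sig_exp T))"
proof -
  obtain q g where Q: "Q = (q,g)" by (cases Q)
  define h where "h = snd (sig_glue Q (sig_exp T))"
  have sp: "sig_glue (q,g) (sig_exp T) = (q + fst T, h)" unfolding h_def by (simp add: prod_eq_iff Q)
  have hv: "\<And>i j. h i j = (if j < q then g i j else if q \<le> i then snd T (i - q) (j - q) + 1 else 1)"
    unfolding h_def by (simp add: snd_sig_glue Q)
  have CsE: "infl_new h q = [0..<q]" using infl_new_glue[of Q "sig_exp T"] unfolding h_def Q by simp
  have key: "infl_val h q (infl_pos q [0..<q] a) (infl_pos q [0..<q] b) = snd (sig_glue (sig_plus Q Q) (sig_exp T)) a b"
    if ab: "a < b" "b < 2 * q + fst T" for a b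
  proof -
    consider "b < q" | "a < q" "q \<le> b" "b < 2*q" | "q \<le> a" "b < 2*q" | "a < q" "2*q \<le> b"
      | "q \<le> a" "a < 2*q" "2*q \<le> b" | "2*q \<le> a" using ab by linarith
    then show ?thesis
    proof cases
      case 1
      then show ?thesis
        using ab by (simp add: infl_pos_def hv snd_sig_glue snd_sig_plus Q)
    next
      case 2
      then have "\<not> q \<le> b - q" by linarith
      then show ?thesis using ab 2 by (simp add: infl_pos_def hv snd_sig_glue snd_sig_plus Q)
    next
      case 3
      then have "b - q < q" by linarith
      then show ?thesis using ab 3 by (simp add: infl_pos_def hv snd_sig_glue snd_sig_plus Q)
    next
      case 4
      then have "\<not> b - q < q" "q \<le> b - q" by linarith+
      then show ?thesis using ab 4 by (simp add: infl_pos_def hv snd_sig_glue snd_sig_plus Q)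
    next
      case 5
      have nq: "\<not> q \<le> a - q" using 5 by linarith
      have "infl_pos q [0..<q] a = Inr (a - q)" "infl_pos q [0..<q] b = Inl (b - q)"
        using 5 by (auto simp: infl_pos_def)
      moreover have "h (a - q) q = 1" using 5 nq by (simp add: hv)
      moreover have "b - q \<noteq> q \<Longrightarrow> h q (b - q) \<ge> 1"
      proof -
        have "\<not> b - q < q" using 5 by linarith
        then show "b - q \<noteq> q \<Longrightarrow> h q (b - q) \<ge> 1" by (simp add: hv)
      qed
      ultimately show ?thesis using 5 ab by (auto simp: snd_sig_glue snd_sig_plus Q min_def)
    next
      case 6
      have "infl_pos q [0..<q] a = Inl (a - q)" "infl_pos q [0..<q] b = Inl (b - q)"
        using 6 ab by (auto simp: infl_pos_def)
      moreover have "h (a - q) (b - q) = snd T (a - (q + q)) (b - (q + q)) + 1"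
      proof -
        have "q \<le> a - q" "\<not> b - q < q" "a - q - q = a - (q + q)" "b - q - q = b - (q + q)" using 6 ab by linarith+
        then show ?thesis using hv[of "a - q" "b - q"] by simp
      qed
      ultimately show ?thesis using 6 ab by (simp add: snd_sig_glue snd_sig_plus Q)
    qed
  qed
  show ?thesis
    unfolding Q sp sig_infl_unfold
    by (rule sig_eqI) (use key in \<open>auto simp: CsE Q\<close>)
qed

definition sig_copies :: "nat \<Rightarrow> sig \<Rightarrow> sig" where "sig_copies n Q = sig_sum (replicate n Q)"

lemma fst_sig_copies [simp]: "fst (sig_copies n Q) = n * fst Q"
  by (simp add: sig_copies_def fst_sig_sum sum_list_replicate)

lemma sig_copies_Suc: "sig_copies (Suc n) Q = sig_plus Q (sig_copies n Q)"
  by (simp add: sig_copies_def sig_sum_Cons)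

lemma sig_copies_add: "sig_eq (sig_copies (a + b) Q) (sig_plus (sig_copies a Q) (sig_copies b Q))"
proof (induct a)
  case 0 then show ?case
    by (simp add: sig_copies_def sig_sum_Nil) (rule sig_eq_sym[OF sig_plus_empty_left], simp)
next
  case (Suc a)
  have "sig_eq (sig_copies (Suc a + b) Q) (sig_plus Q (sig_plus (sig_copies a Q) (sig_copies b Q)))"
    using Suc by (simp add: sig_copies_Suc sig_plus_cong)
  also have "sig_eq \<dots> (sig_plus (sig_copies (Suc a) Q) (sig_copies b Q))"
    by (simp add: sig_copies_Suc sig_eq_sym[OF sig_plus_assoc])
  finally show ?case .
qed

lemma sig_copies_1: "sig_eq (sig_copies 1 Q) Q"
  by (simp add: sig_copies_def sig_sum_Cons sig_sum_Nil sig_plus_empty_right)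

lemma sig_copies_mono: "k \<le> N \<Longrightarrow> sig_below (sig_copies k Q) (sig_copies N Q)"
proof -
  assume k: "k \<le> N"
  have "sig_eq (sig_copies N Q) (sig_plus (sig_copies k Q) (sig_copies (N - k) Q))"
    using sig_copies_add[of k "N - k" Q] k by simp
  then show ?thesis using sig_below_plus_self sig_below_sig_eq_trans sig_eq_sym by blast
qed

lemma sig_glue_copies_pow2_below:
  assumes T: "0 < fst T"
  shows "sig_below (sig_glue (sig_copies (2^t) Q) (sig_exp T)) (sig_glue Q (sig_exp T))"
proof (induct t)
  case 0
  then show ?case
    using sig_glue_cong[OF sig_copies_1] by (simp add: sig_eq_imp_sig_below)
next
  case (Suc t)
  let ?A = "sig_copies (2^t) Q"
  have "sig_eq (sig_glue (sig_copies (2^Suc t) Q) (sig_exp T)) (sig_glue (sig_plus ?A ?A) (sig_exp T))"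
    using sig_copies_add[of "2^t" "2^t" Q] by (simp add: sig_glue_cong mult_2)
  also have "sig_eq \<dots> (sig_infl (sig_glue ?A (sig_exp T)) (fst ?A))"
    by (rule sig_eq_sym[OF sig_infl_glue[OF T]])
  finally have "sig_below (sig_glue (sig_copies (2^Suc t) Q) (sig_exp T)) (sig_glue ?A (sig_exp T))"
    using sig_infl_below[of "fst ?A" "sig_glue ?A (sig_exp T)"] T sig_eq_sig_below_trans by simp
  then show ?case using Suc sig_below_trans by blast
qed

lemma sig_copies_below_glue:
  assumes "0 < fst T"
  shows "sig_below (sig_copies N Q) (sig_glue Q (sig_exp T))"
proof -
  have "sig_below (sig_copies N Q) (sig_copies (2 ^ N) Q)"
    by (rule sig_copies_mono) (simp add: less_exp less_imp_le)
  also have "sig_below \<dots> (sig_glue (sig_copies (2 ^ N) Q) (sig_exp T))"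
    by (rule sig_below_glue_self)
  also have "sig_below \<dots> (sig_glue Q (sig_exp T))"
    using assms by (rule sig_glue_copies_pow2_below)
  finally show ?thesis .
qed

lemma sig_copies_exp_below_exp_plus:
  assumes "0 < fst T"
  shows "sig_below (sig_plus (sig_copies N (sig_exp W)) (sig_exp W)) (sig_exp (sig_plus W T))"
proof -
  let ?Q = "sig_exp W"
  have "sig_eq (sig_plus (sig_copies N ?Q) ?Q) (sig_plus (sig_copies N ?Q) (sig_copies 1 ?Q))"
    by (rule sig_plus_cong[OF sig_eq_refl sig_eq_sym[OF sig_copies_1]])
  also have "sig_eq \<dots> (sig_copies (N + 1) ?Q)"
    by (rule sig_eq_sym[OF sig_copies_add])
  also have "sig_below \<dots> (sig_glue ?Q (sig_exp T))"
    by (rule sig_copies_below_glue[OF assms])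
  also have "sig_eq \<dots> (sig_exp (sig_plus W T))"
    by (rule sig_eq_sym[OF sig_exp_plus_eq_glue])
  finally show ?thesis .
qed

lemma sig_sum_exp_below_copies:
  assumes "\<forall>Z\<in>set Zs. sig_below Z W" and "length Zs \<le> N"
  shows "sig_below (sig_sum (map sig_exp Zs)) (sig_copies N (sig_exp W))"
proof -
  have "list_all2 sig_below (map sig_exp Zs) (replicate (length Zs) (sig_exp W))"
    using assms(1) by (auto simp: list_all2_conv_all_nth intro: sig_exp_mono)
  then have "sig_below (sig_sum (map sig_exp Zs)) (sig_copies (length Zs) (sig_exp W))"
    unfolding sig_copies_def by (rule sig_sum_mono)
  also have "sig_below \<dots> (sig_copies N (sig_exp W))"
    using assms(2) by (rule sig_copies_mono)
  finally show ?thesis .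
qed

section \<open>Ordinals in Cantor normal form\<close>

lemma not_ord_lt_Nil [simp]: "\<not> ord_lt a (C [])"
proof (cases a)
  case (C xs)
  then show ?thesis
    by (cases xs) auto
qed

lemma ord_lt_irrefl_list: "(\<forall>x\<in>set xs. \<not> ord_lt x x) \<Longrightarrow> \<not> ord_lt (C xs) (C xs)"
  by (induct xs) auto

lemma ord_lt_irrefl [simp]: "\<not> ord_lt a a"
proof (induct a)
  case (C xs)
  then show ?case
    using ord_lt_irrefl_list by blast
qed

lemma ord_lt_trans_list:
  "(\<forall>x\<in>set xs. \<forall>y z. ord_lt x y \<longrightarrow> ord_lt y z \<longrightarrow> ord_lt x z) \<Longrightarrow>
   ord_lt (C xs) (C ys) \<Longrightarrow> ord_lt (C ys) (C zs) \<Longrightarrow> ord_lt (C xs) (C zs)"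
proof (induct xs arbitrary: ys zs)
  case Nil
  then show ?case
    by (cases ys; cases zs) auto
next
  case (Cons x xs)
  obtain y ys' where ys: "ys = y # ys'" using Cons(3) by (cases ys) auto
  obtain z zs' where zs: "zs = z # zs'" using Cons(4) ys by (cases zs) auto
  have xt: "\<forall>y z. ord_lt x y \<longrightarrow> ord_lt y z \<longrightarrow> ord_lt x z" using Cons(2) by simp
  have ih: "ord_lt (C xs) (C ys') \<Longrightarrow> ord_lt (C ys') (C zs') \<Longrightarrow> ord_lt (C xs) (C zs')"
    using Cons(1) Cons(2) by simp
  show ?case using Cons(3,4) ys zs xt ih by auto
qed

lemma ord_lt_trans: "ord_lt a b \<Longrightarrow> ord_lt b c \<Longrightarrow> ord_lt a c"
proof (induct a arbitrary: b c)
  case (C xs)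
  obtain ys where b: "b = C ys" by (cases b)
  obtain zs where c: "c = C zs" by (cases c)
  show ?case using ord_lt_trans_list[of xs ys zs] C b c by blast
qed

lemma ord_le_refl [simp]: "ord_le a a"
  by (simp add: ord_le_def)

lemma ord_lt_imp_le: "ord_lt a b \<Longrightarrow> ord_le a b"
  by (simp add: ord_le_def)

lemma ord_le_trans: "ord_le a b \<Longrightarrow> ord_le b c \<Longrightarrow> ord_le a c"
  unfolding ord_le_def using ord_lt_trans by blast

lemma ord_le_less_trans: "ord_le a b \<Longrightarrow> ord_lt b c \<Longrightarrow> ord_lt a c"
  unfolding ord_le_def using ord_lt_trans by blast

lemma ord_less_le_trans: "ord_lt a b \<Longrightarrow> ord_le b c \<Longrightarrow> ord_lt a c"
  unfolding ord_le_def using ord_lt_trans by blast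

lemma ord_le_Nil: "ord_le (C []) a"
proof (cases a)
  case (C xs)
  then show ?thesis
    by (cases xs) (auto simp: ord_le_def)
qed

lemma ord_le_Nil_iff: "ord_le a (C []) \<longleftrightarrow> a = C []"
  by (simp add: ord_le_def)

lemma ord_lt_C_lex:
  "ord_lt (C as) (C cs) \<Longrightarrow> \<exists>k < length cs. take k as = take k cs \<and>
     (length as = k \<or> (k < length as \<and> ord_lt (as ! k) (cs ! k)))"
proof (induct as arbitrary: cs)
  case Nil
  then show ?case
    by (cases cs) auto
next
  case (Cons a as)
  obtain c cs' where cs: "cs = c # cs'" using Cons(2) by (cases cs) auto
  show ?case
  proof (cases "ord_lt a c")
    case True
    then show ?thesis
      using cs by (intro exI[of _ 0]) auto
  next
    case False
    then have "a = c" "ord_lt (C as) (C cs')" using Cons(2) cs by auto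
    then obtain k where "k < length cs'" "take k as = take k cs'"
      "length as = k \<or> (k < length as \<and> ord_lt (as ! k) (cs' ! k))" using Cons(1) by blast
    then show ?thesis using cs \<open>a = c\<close> by (intro exI[of _ "Suc k"]) auto
  qed
qed

lemma ord_lt_append_Cons: "ord_lt (C xs) (C (xs @ y # ys))"
  by (induct xs) auto

lemma ord_lt_C_decomp:
  assumes "ord_valid \<alpha>" and "ord_lt \<alpha> (C cs)"
  obtains k \<gamma> where "k < length cs" and "\<alpha> = C (take k cs @ \<gamma>)" and "ord_valid (C \<gamma>)"
    and "\<forall>a\<in>set \<gamma>. ord_lt a (cs ! k)"
proof -
  obtain as where \<alpha>: "\<alpha> = C as"
    by (cases \<alpha>)
  obtain k where k: "k < length cs" "take k as = take k cs"
      "length as = k \<or> (k < length as \<and> ord_lt (as ! k) (cs ! k))"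
    using ord_lt_C_lex assms(2) unfolding \<alpha> by blast
  have sorted: "sorted_wrt (\<lambda>a b. ord_le b a) as" and valid: "\<forall>x\<in>set as. ord_valid x"
    using assms(1) \<alpha> by auto
  have "\<alpha> = C (take k cs @ drop k as)"
    using k(2) \<alpha> by (metis append_take_drop_id)
  moreover have "ord_valid (C (drop k as))"
    using sorted valid by (auto simp: sorted_wrt_drop dest: in_set_dropD)
  moreover have "ord_lt a (cs ! k)" if "a \<in> set (drop k as)" for a
  proof -
    from that obtain j where "j < length (drop k as)" and "a = drop k as ! j"
      by (metis in_set_conv_nth)
    then have "k + j < length as" and a: "a = as ! (k + j)"
      by auto
    then have "ord_lt (as ! k) (cs ! k)"
      using k(3) by auto
    moreover have "ord_le (as ! (k + j)) (as ! k)"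
      using sorted_wrt_nth_less[OF sorted, of k "k + j"] \<open>k + j < length as\<close> by (cases j) auto
    ultimately show ?thesis
      using a ord_le_less_trans by blast
  qed
  ultimately show ?thesis
    using that k(1) by blast
qed

text \<open>\<open>C xs\<close> is a natural number, that is, a sum of copies of \<open>\<omega>\<^sup>0\<close>.\<close>

definition all_zero :: "cnf list \<Rightarrow> bool" where
  "all_zero xs \<longleftrightarrow> (\<forall>x\<in>set xs. x = C [])"

lemma all_zero_replicate: "all_zero xs \<Longrightarrow> xs = replicate (length xs) (C [])"
  unfolding all_zero_def by (simp add: replicate_length_same)

lemma all_zero_ord_lt: "all_zero xs \<Longrightarrow> all_zero ys \<Longrightarrow> length xs < length ys \<Longrightarrow> ord_lt (C xs) (C ys)"
proof -
  assume a: "all_zero xs" "all_zero ys" "length xs < length ys"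
  have "length ys = length xs + Suc (length ys - length xs - 1)" using a(3) by simp
  then have "replicate (length ys) (C []) = replicate (length xs) (C []) @ replicate (Suc (length ys - length xs - 1)) (C [])"
    by (metis replicate_add)
  then have "ys = xs @ C [] # replicate (length ys - length xs - 1) (C [])"
    using all_zero_replicate[OF a(1)] all_zero_replicate[OF a(2)] by simp
  then show ?thesis using ord_lt_append_Cons by metis
qed

lemma ord_lt_all_zero: "ord_lt (C xs) (C ys) \<Longrightarrow> all_zero ys \<Longrightarrow> all_zero xs \<and> length xs < length ys"
proof -
  assume lt: "ord_lt (C xs) (C ys)" and z: "all_zero ys"
  obtain k where k: "k < length ys" "take k xs = take k ys"
      "length xs = k \<or> (k < length xs \<and> ord_lt (xs ! k) (ys ! k))" using ord_lt_C_lex[OF lt] by blast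
  have "ys ! k = C []" using z k(1) unfolding all_zero_def by simp
  then have "length xs = k" using k(3) by auto
  then have "xs = take k ys" using k(2) by (metis take_all order_refl)
  then show ?thesis using z k(1) \<open>length xs = k\<close> unfolding all_zero_def by (auto dest: in_set_takeD)
qed

lemma ord_le_all_zero: "ord_le (C xs) (C ys) \<Longrightarrow> all_zero ys \<Longrightarrow> all_zero xs \<and> length xs \<le> length ys"
  unfolding ord_le_def using ord_lt_all_zero by fastforce

lemma all_zero_tl: "all_zero xs \<Longrightarrow> all_zero (tl xs)"
  unfolding all_zero_def by (cases xs) auto

lemma ord_minus1_C: "ord_minus1 (C xs) = (if xs \<noteq> [] \<and> all_zero xs then C (tl xs) else C xs)"
  by (simp add: ord_minus1_def all_zero_def)

lemma ord_minus1_mono: "ord_le a b \<Longrightarrow> ord_le (ord_minus1 a) (ord_minus1 b)"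
proof -
  assume ab: "ord_le a b"
  obtain xs where a: "a = C xs" by (cases a)
  obtain ys where b: "b = C ys" by (cases b)
  show ?thesis
  proof (cases "xs \<noteq> [] \<and> all_zero xs")
    case True
    show ?thesis
    proof (cases "ys \<noteq> [] \<and> all_zero ys")
      case True2: True
      have "length xs \<le> length ys" using ord_le_all_zero[of xs ys] ab a b True2 by blast
      then have "length (tl xs) \<le> length (tl ys)" by simp
      then have "ord_le (C (tl xs)) (C (tl ys))"
        using all_zero_ord_lt[of "tl xs" "tl ys"] all_zero_tl True True2
        by (metis all_zero_replicate le_neq_implies_less ord_le_def)
      then show ?thesis using True True2 a b by (simp add: ord_minus1_C)
    next
      case False
      have "ord_lt (C (tl xs)) (C xs)"
        using ord_lt_append_Cons[of "tl xs" "hd xs" "[]"] True all_zero_replicate[OF all_zero_tl[of xs]] True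
        by (metis all_zero_ord_lt all_zero_tl diff_less length_greater_0_conv length_tl zero_less_one)
      then have "ord_le (C (tl xs)) (C ys)" using ab a b ord_less_le_trans ord_lt_imp_le by blast
      then show ?thesis using True False a b by (auto simp: ord_minus1_C)
    qed
  next
    case False
    show ?thesis
    proof (cases "ys \<noteq> [] \<and> all_zero ys")
      case True
      then have "all_zero xs" using ord_le_all_zero[of xs ys] ab a b by blast
      then have "xs = []" using False by simp
      then show ?thesis using a b by (simp add: ord_minus1_C ord_le_Nil)
    next
      case False2: False
      then show ?thesis using False a b ab by (auto simp: ord_minus1_C)
    qed
  qed
qed

lemma sorted_wrt_tl: "sorted_wrt R xs \<Longrightarrow> sorted_wrt R (tl xs)"
  by (cases xs) auto

lemma ord_valid_minus1: "ord_valid a \<Longrightarrow> ord_valid (ord_minus1 a)"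
proof -
  assume v: "ord_valid a"
  obtain xs where a: "a = C xs" by (cases a)
  show ?thesis using v a
    by (auto simp: ord_minus1_C sorted_wrt_tl dest: list.set_sel(2))
qed

text \<open>The ordinal \<open>1 + a\<close>: a summand \<open>\<omega>\<^sup>0\<close> is added to a natural number and absorbed by an
  infinite ordinal.\<close>

definition ord_one_plus :: "cnf \<Rightarrow> cnf" where
  "ord_one_plus a = (case a of C xs \<Rightarrow> if all_zero xs then C (C [] # xs) else C xs)"

lemma ord_one_plus_C: "ord_one_plus (C xs) = (if all_zero xs then C (C [] # xs) else C xs)"
  by (simp add: ord_one_plus_def)

lemma ord_minus1_one_plus: "ord_minus1 (ord_one_plus a) = a"
proof (cases a)
  case (C xs)
  then show ?thesis
    by (auto simp: ord_one_plus_C ord_minus1_C all_zero_def)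
qed

lemma ord_one_plus_nonzero: "ord_one_plus a \<noteq> ord_zero"
proof (cases a)
  case (C xs)
  then show ?thesis
    by (cases xs) (auto simp: ord_one_plus_C ord_zero_def all_zero_def)
qed

lemma ord_valid_one_plus: "ord_valid a \<Longrightarrow> ord_valid (ord_one_plus a)"
proof (cases a)
  case (C xs)
  assume "ord_valid a"
  then show ?thesis using C by (auto simp: ord_one_plus_C all_zero_def ord_le_def)
qed

lemma ord_valid_hd_nonzero:
  assumes "ord_valid (C ys)" "ys \<noteq> []" "\<not> all_zero ys"
  shows "ord_lt (C []) (hd ys)"
proof -
  obtain y ys' where ys: "ys = y # ys'" using assms(2) by (cases ys) auto
  have "y \<noteq> C []"
  proof
    assume y: "y = C []"
    then have "\<forall>z\<in>set ys'. ord_le z (C [])" using assms(1) ys by simp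
    then have "all_zero ys" using y ys by (auto simp: all_zero_def ord_le_Nil_iff)
    then show False using assms(3) by simp
  qed
  then obtain z zs where "y = C (z # zs)" by (metis cnf.exhaust list.exhaust)
  then show ?thesis using ys by simp
qed

lemma ord_one_plus_less: "ord_lt a (ord_minus1 b) \<Longrightarrow> ord_valid b \<Longrightarrow> ord_lt (ord_one_plus a) b"
proof -
  assume lt: "ord_lt a (ord_minus1 b)" and v: "ord_valid b"
  obtain xs where a: "a = C xs" by (cases a)
  obtain ys where b: "b = C ys" by (cases b)
  show ?thesis
  proof (cases "ys \<noteq> [] \<and> all_zero ys")
    case True
    then have lt2: "ord_lt (C xs) (C (tl ys))" using lt a b by (simp add: ord_minus1_C)
    then have "all_zero xs" "length xs < length (tl ys)" using ord_lt_all_zero all_zero_tl True by blast+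
    then have "ord_lt (C (C [] # xs)) (C ys)"
      using all_zero_ord_lt[of "C [] # xs" ys] True by (auto simp: all_zero_def)
    then show ?thesis using a b \<open>all_zero xs\<close> by (simp add: ord_one_plus_C)
  next
    case False
    then have lt2: "ord_lt (C xs) (C ys)" using lt a b by (auto simp: ord_minus1_C)
    then have ne: "ys \<noteq> []" by auto
    then have nz: "\<not> all_zero ys" using False by simp
    show ?thesis
    proof (cases "all_zero xs")
      case True
      have "ord_lt (C []) (hd ys)" using ord_valid_hd_nonzero v b ne nz by blast
      then have "ord_lt (C (C [] # xs)) (C ys)" using ne by (cases ys) auto
      then show ?thesis using a b True by (simp add: ord_one_plus_C)
    next
      case False
      then show ?thesis using a lt2 b by (simp add: ord_one_plus_C)
    qed
  qed
qed

lemma ord_one_plus_mono: "ord_le a b \<Longrightarrow> ord_valid b \<Longrightarrow> ord_le (ord_one_plus a) (ord_one_plus b)"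
proof -
  assume le: "ord_le a b" and v: "ord_valid b"
  obtain xs where a: "a = C xs" by (cases a)
  obtain ys where b: "b = C ys" by (cases b)
  show ?thesis
  proof (cases "all_zero ys")
    case True
    then have "all_zero xs" "length xs \<le> length ys" using ord_le_all_zero le a b by blast+
    then show ?thesis using True a b all_zero_ord_lt[of "C [] # xs" "C [] # ys"]
      by (cases "length xs = length ys") (auto simp: ord_one_plus_C ord_le_def all_zero_def dest: all_zero_replicate
          intro: all_zero_replicate, metis all_zero_def all_zero_replicate)
  next
    case False
    then have ne: "ys \<noteq> []" by (auto simp: all_zero_def)
    show ?thesis
    proof (cases "all_zero xs")
      case True
      have "ord_lt (C []) (hd ys)" using ord_valid_hd_nonzero v b ne False by blast
      then have "ord_lt (C (C [] # xs)) (C ys)" using ne by (cases ys) auto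
      then show ?thesis using a b True False by (simp add: ord_one_plus_C ord_le_def)
    next
      case False2: False
      then show ?thesis using a b False le by (simp add: ord_one_plus_C)
    qed
  qed
qed

lemma ord_omexp_nonzero: "b \<noteq> ord_zero \<Longrightarrow> ord_omexp b = C [ord_minus1 b]"
  by (simp add: ord_omexp_def)

lemma ord_sum_omexp:
  "(\<forall>b\<in>set bs. b \<noteq> ord_zero) \<Longrightarrow> sorted_wrt (\<lambda>x y. ord_le y x) (map ord_minus1 bs) \<Longrightarrow>
   ord_sum (map ord_omexp bs) = C (map ord_minus1 bs)"
proof (induct bs rule: rev_induct)
  case Nil
  then show ?case
    by (simp add: ord_sum_def ord_zero_def)
next
  case (snoc b bs)
  have ih: "ord_sum (map ord_omexp bs) = C (map ord_minus1 bs)"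
    using snoc by (simp add: sorted_wrt_append)
  have all: "\<forall>x\<in>set (map ord_minus1 bs). ord_le (ord_minus1 b) x"
    using snoc(3) by (simp add: sorted_wrt_append)
  have "ord_sum (map ord_omexp (bs @ [b])) = ord_add (ord_sum (map ord_omexp bs)) (C [ord_minus1 b])"
    using snoc(2) by (simp add: ord_sum_def ord_omexp_nonzero)
  also have "\<dots> = C (map ord_minus1 bs @ [ord_minus1 b])"
    using ih all by (simp add: filter_id_conv)
  finally show ?case by simp
qed

lemma ord_sum_omexp_nonzero:
  "bs \<noteq> [] \<Longrightarrow> (\<forall>b\<in>set bs. b \<noteq> ord_zero) \<Longrightarrow> ord_sum (map ord_omexp bs) \<noteq> ord_zero"
proof (induct bs rule: rev_induct)
  case Nil
  then show ?case
    by simp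
next
  case (snoc b bs)
  obtain xs where "foldl ord_add ord_zero (map ord_omexp bs) = C xs" by (metis cnf.exhaust)
  then show ?case using snoc(3) by (simp add: ord_sum_def ord_omexp_nonzero ord_zero_def)
qed

lemma ord_sum_single: "ord_sum [C (y # ys)] = C (y # ys)"
  by (simp add: ord_sum_def ord_zero_def)

lemma omexp_one: "ord_omexp ord_one = ord_one"
  by (simp add: ord_omexp_def ord_one_def ord_zero_def ord_minus1_def)

lemma sig_sum_exp_filter_nonempty:
  "sig_eq (sig_sum (map sig_exp Xs)) (sig_sum (map sig_exp (filter (\<lambda>A. 0 < fst A) Xs)))"
proof (induct Xs)
  case Nil
  then show ?case
    by simp
next
  case (Cons X Xs)
  show ?case
  proof (cases "0 < fst X")
    case True
    then show ?thesis
      using Cons by (simp add: sig_sum_Cons sig_plus_cong)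
  next
    case False
    then have "sig_eq (sig_sum (map sig_exp (X # Xs))) (sig_sum (map sig_exp Xs))"
      by (simp add: sig_sum_Cons sig_plus_empty_left)
    then show ?thesis using Cons False sig_eq_trans by auto
  qed
qed

text \<open>Inside \<open>exp A\<close> all values are positive, while \<^const>\<open>sig_plus\<close> puts \<open>0\<close> across its
  summands; so the first summand of a sum of exponentials can be read off.\<close>

lemma sig_plus_exp_inj:
  assumes e: "sig_eq (sig_plus (sig_exp A) R) (sig_plus (sig_exp B) R')"
    and A: "0 < fst A" and B: "0 < fst B"
  shows "fst A = fst B \<and> sig_eq A B \<and> sig_eq R R'"
proof -
  have tot: "fst A + fst R = fst B + fst R'" using sig_eq_fst[OF e] by simp
  have nlt: False if lt: "fst X1 < fst X2" and pos: "0 < fst X1"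
    and ee: "sig_eq (sig_plus (sig_exp X1) R1) (sig_plus (sig_exp X2) R2)" for X1 X2 R1 R2
  proof -
    have "snd (sig_plus (sig_exp X1) R1) (fst X1 - 1) (fst X1) = snd (sig_plus (sig_exp X2) R2) (fst X1 - 1) (fst X1)"
      by (rule sig_eqD[OF ee]) (use lt pos sig_eq_fst[OF ee] in auto)
    moreover have "\<not> fst X1 \<le> fst X1 - Suc 0" using pos by linarith
    ultimately show False using lt pos by (simp add: snd_sig_plus)
  qed
  have "\<not> fst A < fst B" using nlt[OF _ A e] by blast
  moreover have "\<not> fst B < fst A" using nlt[OF _ B sig_eq_sym[OF e]] by blast
  ultimately have f: "fst A = fst B" by linarith
  have "sig_eq A B"
  proof (rule sig_eqI)
    show "fst A = fst B" by (rule f)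
    fix i j assume "i < j" "j < fst A"
    then show "snd A i j = snd B i j" using sig_eqD[OF e, of i j] f by (simp add: snd_sig_plus)
  qed
  moreover have "sig_eq R R'"
  proof (rule sig_eqI)
    show "fst R = fst R'" using tot f by simp
    fix i j assume "i < j" "j < fst R"
    then show "snd R i j = snd R' i j" using sig_eqD[OF e, of "i + fst A" "j + fst A"] f
      by (simp add: snd_sig_plus)
  qed
  ultimately show ?thesis using f by blast
qed

lemma sum_pos_empty: "\<forall>A\<in>set As. 0 < fst A \<Longrightarrow> sum_list (map fst As) = (0::nat) \<Longrightarrow> As = []"
  by (cases As) auto

lemma sig_sum_exp_inj:
  "(\<forall>A\<in>set As. 0 < fst A) \<Longrightarrow> (\<forall>B\<in>set Bs. 0 < fst B) \<Longrightarrow>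
   sig_eq (sig_sum (map sig_exp As)) (sig_sum (map sig_exp Bs)) \<Longrightarrow>
   length As = length Bs \<and> (\<forall>i<length As. sig_eq (As ! i) (Bs ! i))"
proof (induct As arbitrary: Bs)
  case Nil
  have "fst (sig_sum (map sig_exp Bs)) = 0" using sig_eq_fst[OF Nil(3)] by (simp add: sig_sum_Nil)
  then have "sum_list (map fst Bs) = 0" by (simp add: fst_sig_sum o_def)
  then have "Bs = []" using Nil(2) sum_pos_empty by blast
  then show ?case by simp
next
  case (Cons A As)
  have "fst (sig_sum (map sig_exp Bs)) > 0" using sig_eq_fst[OF Cons(4)] Cons(2) by (simp add: sig_sum_Cons)
  then obtain B Bs' where Bs: "Bs = B # Bs'" by (cases Bs) (auto simp: sig_sum_Nil)
  have s: "fst A = fst B \<and> sig_eq A B \<and> sig_eq (sig_sum (map sig_exp As)) (sig_sum (map sig_exp Bs'))"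
    by (rule sig_plus_exp_inj) (use Cons(2-4) Bs in \<open>auto simp: sig_sum_Cons\<close>)
  have p1: "\<forall>A\<in>set As. 0 < fst A" using Cons(2) by simp
  have p2: "\<forall>B\<in>set Bs'. 0 < fst B" using Cons(3) Bs by simp
  have ih: "length As = length Bs' \<and> (\<forall>i<length As. sig_eq (As ! i) (Bs' ! i))"
    using Cons(1)[OF p1 p2] s by blast
  show ?case
  proof (intro conjI allI impI)
    show "length (A # As) = length Bs" using ih Bs by simp
    fix i assume "i < length (A # As)"
    then show "sig_eq ((A # As) ! i) (Bs ! i)" using ih s Bs by (cases i) auto
  qed
qed

lemma rho_rel_cong:
  assumes "rho_rel X a" "sig_eq X Y" shows "rho_rel Y a"
proof -
  have s: "sig_eq Y X" using assms(2) by (rule sig_eq_sym)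
  from assms(1) show ?thesis
  proof (cases rule: rho_rel.cases)
    case rho_zero
    then show ?thesis
      using s by (metis rho_rel.rho_zero sig_eq_trans)
  next
    case rho_one
    then show ?thesis
      using s by (metis rho_rel.rho_one sig_eq_trans)
  next
    case (rho_sum As bs)
    then show ?thesis
      using s sig_eq_trans[OF s] by (metis rho_rel.rho_sum)
  qed
qed

lemma sum_fst_one:
  assumes "\<forall>A\<in>set As. 0 < fst A" "sum_list (map fst As) = (1::nat)"
  shows "\<exists>A. As = [A] \<and> fst A = 1"
proof (cases As)
  case Nil
  then show ?thesis
    using assms by simp
next
  case (Cons A As')
  then have "As' = []" using assms by (cases As') auto
  then show ?thesis using Cons assms by simp
qed

lemma rho_rel_summands_nonempty: "\<forall>i<length As. BB (As ! i) \<and> \<not> sig_eq (As ! i) sig_zero \<and> P i \<Longrightarrow> \<forall>A\<in>set As. 0 < fst A"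
  by (metis in_set_conv_nth sig_eq_zero_iff neq0_conv)

lemma rho_rel_one: "rho_rel X a \<Longrightarrow> fst X = 1 \<Longrightarrow> a = ord_one"
proof (induct rule: rho_rel.induct)
  case (rho_zero X)
  then show ?case
    by (simp add: sig_eq_zero_iff)
next
  case (rho_one X)
  then show ?case
    by simp
next
  case (rho_sum As bs X)
  have pos: "\<forall>A\<in>set As. 0 < fst A" using rho_sum(2) by (rule rho_rel_summands_nonempty)
  have "sum_list (map fst As) = 1" using sig_eq_fst[OF rho_sum(3)] rho_sum(4)
    by (simp add: fst_sig_sum o_def)
  then obtain A where A: "As = [A]" "fst A = 1" using sum_fst_one pos by blast
  then obtain b where b: "bs = [b]" using rho_sum(1) by (cases bs) auto
  have "b = ord_one" using rho_sum(2) A b by auto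
  then show ?case using b omexp_one by (simp add: ord_sum_single ord_one_def)
qed

lemma rho_rel_empty: "rho_rel X a \<Longrightarrow> fst X = 0 \<Longrightarrow> a = ord_zero"
proof (induct rule: rho_rel.induct)
  case (rho_zero X)
  then show ?case
    by simp
next
  case (rho_one X)
  then show ?case
    by (simp add: sig_eq_one_iff)
next
  case (rho_sum As bs X)
  have "\<forall>A\<in>set As. 0 < fst A"
    using rho_sum(2) by (rule rho_rel_summands_nonempty)
  moreover have "sum_list (map fst As) = 0"
    using sig_eq_fst[OF rho_sum(3)] rho_sum(4) by (simp add: fst_sig_sum o_def)
  ultimately have "As = []"
    by (cases As) auto
  then show ?case
    using rho_sum(1) by (simp add: ord_sum_def)
qed

lemma rho_rel_unique: "rho_rel X a \<Longrightarrow> rho_rel X b \<Longrightarrow> a = b"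
proof (induct arbitrary: b rule: rho_rel.induct)
  case (rho_zero X)
  then show ?case
    using rho_rel_empty[OF rho_zero(2)] by (simp add: sig_eq_zero_iff)
next
  case (rho_one X)
  then show ?case
    using rho_rel_one[OF rho_one(2)] by (simp add: sig_eq_one_iff)
next
  case (rho_sum As bs X)
  note outer = rho_sum
  have "rho_rel X (ord_sum (map ord_omexp bs))"
    using outer(1-3) by (intro rho_rel.rho_sum) auto
  from outer(4) show ?case
  proof (cases rule: rho_rel.cases)
    case rho_zero
    then show ?thesis
      using rho_rel_empty[OF \<open>rho_rel X (ord_sum (map ord_omexp bs))\<close>] by (simp add: sig_eq_zero_iff)
  next
    case rho_one
    then show ?thesis
      using rho_rel_one[OF \<open>rho_rel X (ord_sum (map ord_omexp bs))\<close>] by (simp add: sig_eq_one_iff)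
  next
    case (rho_sum As' bs')
    have "\<forall>A\<in>set As. 0 < fst A"
      using outer(2) by (rule rho_rel_summands_nonempty)
    moreover have "\<forall>A\<in>set As'. 0 < fst A"
      using rho_sum(3) by (rule rho_rel_summands_nonempty)
    moreover have "sig_eq (sig_sum (map sig_exp As)) (sig_sum (map sig_exp As'))"
      using sig_eq_trans[OF sig_eq_sym[OF outer(3)] rho_sum(4)] .
    ultimately have "length As = length As'" and As_eq: "\<forall>i<length As. sig_eq (As ! i) (As' ! i)"
      using sig_sum_exp_inj by blast+
    have "bs = bs'"
    proof (rule nth_equalityI)
      show "length bs = length bs'"
        using \<open>length As = length As'\<close> outer(1) rho_sum(2) by simp
      fix i
      assume "i < length bs"
      then have "i < length As"
        using outer(1) by simp
      then have "rho_rel (As' ! i) (bs' ! i)" and "sig_eq (As' ! i) (As ! i)"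
        using rho_sum(3) As_eq \<open>length As = length As'\<close> sig_eq_sym by auto
      then have "rho_rel (As ! i) (bs' ! i)"
        by (rule rho_rel_cong)
      then show "bs ! i = bs' ! i"
        using outer(2) \<open>i < length As\<close> by blast
    qed
    then show ?thesis
      using rho_sum by simp
  qed
qed

lemma rho_eqI: "rho_rel X a \<Longrightarrow> rho X = a"
  unfolding rho_def using rho_rel_unique by blast

lemma BB_rho_rel_ex: "BB X \<Longrightarrow> \<exists>a. rho_rel X a"
proof (induct rule: BB.induct)
  case (BB_zero X)
  then show ?case
    using rho_rel.rho_zero by blast
next
  case (BB_one X)
  then show ?case
    using rho_rel.rho_one by blast
next
  case (BB_sum Xs X)
  define Ys where "Ys = filter (\<lambda>A. 0 < fst A) Xs"
  have Ys: "\<forall>Y\<in>set Ys. BB Y \<and> (\<exists>a. rho_rel Y a) \<and> 0 < fst Y"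
    unfolding Ys_def using BB_sum(1) by (metis (no_types, lifting) in_set_conv_nth mem_Collect_eq set_filter)
  define bs where "bs = map (\<lambda>Y. SOME a. rho_rel Y a) Ys"
  have "rho_rel X (ord_sum (map ord_omexp bs))"
  proof (rule rho_rel.rho_sum)
    show "length Ys = length bs" by (simp add: bs_def)
    show "\<forall>i<length Ys. BB (Ys ! i) \<and> \<not> sig_eq (Ys ! i) sig_zero \<and> rho_rel (Ys ! i) (bs ! i)"
    proof (intro allI impI conjI)
      fix i assume i: "i < length Ys"
      then have Y: "BB (Ys ! i) \<and> (\<exists>a. rho_rel (Ys ! i) a) \<and> 0 < fst (Ys ! i)" using Ys nth_mem by blast
      then show "BB (Ys ! i)" by blast
      show "\<not> sig_eq (Ys ! i) sig_zero" using Y by (simp add: sig_eq_zero_iff)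
      show "rho_rel (Ys ! i) (bs ! i)" using Y i unfolding bs_def by (simp add: someI_ex)
    qed
    show "sig_eq X (sig_sum (map sig_exp Ys))"
      using BB_sum(2) sig_sum_exp_filter_nonempty Ys_def sig_eq_trans by blast
  qed
  then show ?case by blast
qed

lemma RR_imp_BB: "RR X \<Longrightarrow> BB X"
  by (induct rule: RR.induct) (auto intro: BB.intros)

lemma rho_rel_rho: "BB X \<Longrightarrow> rho_rel X (rho X)"
  using BB_rho_rel_ex rho_eqI by metis

lemma rho_empty: "fst X = 0 \<Longrightarrow> rho X = ord_zero"
  by (rule rho_eqI, rule rho_rel.rho_zero) (simp add: sig_eq_zero_iff)

lemma rho_singleton: "fst X = 1 \<Longrightarrow> rho X = ord_one"
  by (rule rho_eqI, rule rho_rel.rho_one) (simp add: sig_eq_one_iff)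

lemma rho_rel_nonzero: "rho_rel X a \<Longrightarrow> 0 < fst X \<Longrightarrow> a \<noteq> ord_zero"
proof (induct rule: rho_rel.induct)
  case (rho_zero X)
  then show ?case
    by (simp add: sig_eq_zero_iff)
next
  case (rho_one X)
  then show ?case
    by (simp add: ord_one_def ord_zero_def)
next
  case (rho_sum As bs X)
  have pos: "\<forall>A\<in>set As. 0 < fst A" using rho_sum(2) by (rule rho_rel_summands_nonempty)
  have "0 < sum_list (map fst As)" using sig_eq_fst[OF rho_sum(3)] rho_sum(4)
    by (simp add: fst_sig_sum o_def)
  then have ne: "As \<noteq> []" by auto
  have "\<forall>b\<in>set bs. b \<noteq> ord_zero"
  proof
    fix b assume "b \<in> set bs"
    then obtain i where i: "i < length bs" "b = bs ! i" by (auto simp: in_set_conv_nth)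
    then have i2: "i < length As" using rho_sum(1) by simp
    then have "0 < fst (As ! i)" using pos nth_mem by blast
    moreover have "0 < fst (As ! i) \<longrightarrow> bs ! i \<noteq> ord_zero" using rho_sum(2) i2 by blast
    ultimately show "b \<noteq> ord_zero" using i by simp
  qed
  moreover have "bs \<noteq> []" using ne rho_sum(1) by auto
  ultimately show ?case using ord_sum_omexp_nonzero by blast
qed

lemma rho_nonzero: "BB X \<Longrightarrow> 0 < fst X \<Longrightarrow> rho X \<noteq> ord_zero"
  using rho_rel_rho rho_rel_nonzero by blast

lemma rho_cong: "BB X \<Longrightarrow> sig_eq X Y \<Longrightarrow> rho Y = rho X"
  using rho_rel_rho rho_rel_cong rho_eqI by blast

definition rho_ge :: "sig \<Rightarrow> sig \<Rightarrow> bool" where "rho_ge x y \<longleftrightarrow> ord_le (rho y) (rho x)"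

lemma transp_rho_ge: "transp rho_ge"
  unfolding transp_def rho_ge_def using ord_le_trans by blast

lemma sorted_minus1_rho: "sorted_wrt rho_ge Zs \<Longrightarrow> sorted_wrt (\<lambda>x y. ord_le y x) (map (ord_minus1 \<circ> rho) Zs)"
  unfolding sorted_wrt_map
  by (rule sorted_wrt_mono_rel[of _ rho_ge]) (auto simp: rho_ge_def ord_minus1_mono)

lemma RR_sum_sorted:
  assumes "\<forall>Z\<in>set Zs. RR Z" "sorted_wrt rho_ge Zs"
  shows "RR (sig_sum (map sig_exp Zs))"
proof (rule RR.RR_sum[of Zs])
  show "\<forall>i<length Zs. RR (Zs ! i)" using assms(1) by simp
  show "\<forall>i. Suc i < length Zs \<longrightarrow> ord_le (rho (Zs ! Suc i)) (rho (Zs ! i))"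
    using assms(2) sorted_wrt_nth_less[of rho_ge Zs] unfolding rho_ge_def by auto
qed simp

lemma rho_sum_sorted:
  assumes "\<forall>Z\<in>set Zs. BB Z \<and> 0 < fst Z" "sorted_wrt rho_ge Zs"
  shows "rho (sig_sum (map sig_exp Zs)) = C (map (ord_minus1 \<circ> rho) Zs)"
proof -
  have "rho_rel (sig_sum (map sig_exp Zs)) (ord_sum (map ord_omexp (map rho Zs)))"
  proof (rule rho_rel.rho_sum)
    show "length Zs = length (map rho Zs)" by simp
    show "\<forall>i<length Zs. BB (Zs ! i) \<and> \<not> sig_eq (Zs ! i) sig_zero \<and> rho_rel (Zs ! i) (map rho Zs ! i)"
      using assms(1) nth_mem by (auto simp: sig_eq_zero_iff intro!: rho_rel_rho)
  qed simp
  moreover have "ord_sum (map ord_omexp (map rho Zs)) = C (map ord_minus1 (map rho Zs))"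
  proof (rule ord_sum_omexp)
    show "\<forall>b\<in>set (map rho Zs). b \<noteq> ord_zero" using assms(1) rho_nonzero by auto
    show "sorted_wrt (\<lambda>x y. ord_le y x) (map ord_minus1 (map rho Zs))"
      using sorted_minus1_rho[OF assms(2)] by (simp add: o_def)
  qed
  ultimately show ?thesis using rho_eqI by simp
qed

lemma ord_valid_minus1_rho_list:
  assumes "\<forall>Z\<in>set Zs. ord_valid (rho Z)" "sorted_wrt rho_ge Zs"
  shows "ord_valid (C (map (ord_minus1 \<circ> rho) Zs))"
  using assms sorted_minus1_rho[OF assms(2)] by (auto simp: ord_valid_minus1)

lemma sorted_rho_ge_filter:
  assumes "\<forall>i. Suc i < length Xs \<longrightarrow> ord_le (rho (Xs ! Suc i)) (rho (Xs ! i))"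
  shows "sorted_wrt rho_ge (filter P Xs)"
proof -
  have "sorted_wrt rho_ge Xs" using sorted_wrt_iff_nth_Suc_transp[OF transp_rho_ge] assms
    unfolding rho_ge_def by simp
  then show ?thesis by (simp add: sorted_wrt_filter)
qed

lemma RR_ord_valid: "RR X \<Longrightarrow> ord_valid (rho X)"
proof (induct rule: RR.induct)
  case (RR_zero X)
  then show ?case
    by (simp add: rho_empty sig_eq_zero_iff ord_zero_def)
next
  case (RR_one X)
  then show ?case
    by (simp add: rho_singleton sig_eq_one_iff ord_one_def)
next
  case (RR_sum Xs X)
  define Ys where "Ys = filter (\<lambda>A. 0 < fst A) Xs"
  have Ys: "\<forall>Y\<in>set Ys. RR Y \<and> ord_valid (rho Y) \<and> 0 < fst Y"
    unfolding Ys_def using RR_sum(1) by (metis (no_types, lifting) in_set_conv_nth mem_Collect_eq set_filter)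
  have s: "sorted_wrt rho_ge Ys" unfolding Ys_def by (rule sorted_rho_ge_filter[OF RR_sum(2)])
  have e: "sig_eq X (sig_sum (map sig_exp Ys))" unfolding Ys_def
    using RR_sum(3) sig_sum_exp_filter_nonempty sig_eq_trans by blast
  have "BB X" using RR_imp_BB RR.RR_sum[OF _ RR_sum(2,3)] RR_sum(1) by blast
  then have "rho X = rho (sig_sum (map sig_exp Ys))" using rho_cong e by metis
  also have "\<dots> = C (map (ord_minus1 \<circ> rho) Ys)"
    using rho_sum_sorted s Ys RR_imp_BB by blast
  finally have r: "rho X = C (map (ord_minus1 \<circ> rho) Ys)" .
  have v: "\<forall>Y\<in>set Ys. ord_valid (rho Y)" using Ys by blast
  show ?case unfolding r by (rule ord_valid_minus1_rho_list[OF v s])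
qed

lemma sorted_rho_ge_one_plus:
  assumes "map rho Zs = map ord_one_plus \<gamma>" "ord_valid (C \<gamma>)"
  shows "sorted_wrt rho_ge Zs"
proof -
  have sg: "sorted_wrt (\<lambda>a b. ord_le b a) \<gamma>" "\<forall>x\<in>set \<gamma>. ord_valid x" using assms(2) by auto
  have "sorted_wrt (\<lambda>a b. ord_le (ord_one_plus b) (ord_one_plus a)) \<gamma>"
    by (rule sorted_wrt_mono_rel[OF _ sg(1)]) (use sg(2) ord_one_plus_mono in blast)
  then have "sorted_wrt (\<lambda>a b. ord_le b a) (map ord_one_plus \<gamma>)" by (simp add: sorted_wrt_map)
  then have "sorted_wrt (\<lambda>a b. ord_le b a) (map rho Zs)" using assms(1) by simp
  then show ?thesis unfolding rho_ge_def[abs_def] by (simp add: sorted_wrt_map)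
qed

section \<open>Realising all ordinals below \<^const>\<open>rho\<close>\<close>

definition realised_below :: "cnf set \<Rightarrow> sig \<Rightarrow> bool" where
  "realised_below S W \<longleftrightarrow> (\<forall>\<alpha>\<in>S. \<exists>A. RR A \<and> rho A = \<alpha> \<and> sig_below A W)"

text \<open>The remainder \<open>T\<close> must be nonempty: in the exponential case it is what makes room for
  many copies of \<open>exp W\<close> (lemma \<open>sig_copies_exp_below_exp_plus\<close>).\<close>

definition splits_realising :: "sig \<Rightarrow> bool" where
  "splits_realising X \<longleftrightarrow> (\<forall>S. finite S \<longrightarrow> (\<forall>\<alpha>\<in>S. ord_valid \<alpha> \<and> ord_lt \<alpha> (rho X)) \<longrightarrow> 0 < fst X \<longrightarrow>
     (\<exists>W T. 0 < fst T \<and> sig_below (sig_plus W T) X \<and> realised_below S W))"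

lemma splits_realising_cong:
  assumes "splits_realising X" and "BB X" and "sig_eq X X'"
  shows "splits_realising X'"
  unfolding splits_realising_def
proof (intro allI impI)
  fix S
  assume "finite S" and "\<forall>\<alpha>\<in>S. ord_valid \<alpha> \<and> ord_lt \<alpha> (rho X')" and "0 < fst X'"
  moreover have "rho X' = rho X" and "fst X' = fst X"
    using rho_cong[OF assms(2,3)] sig_eq_fst[OF assms(3)] by simp_all
  ultimately obtain W T where "0 < fst T" "sig_below (sig_plus W T) X" "realised_below S W"
    using assms(1) unfolding splits_realising_def by auto
  then show "\<exists>W T. 0 < fst T \<and> sig_below (sig_plus W T) X' \<and> realised_below S W"
    using sig_below_sig_eq_trans[OF _ assms(3)] by blast
qed

lemma splits_realisingD:
  assumes "splits_realising X" and "finite S" and "\<forall>\<alpha>\<in>S. ord_valid \<alpha> \<and> ord_lt \<alpha> (rho X)"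
    and "0 < fst X"
  obtains W T where "0 < fst T" and "sig_below (sig_plus W T) X" and "realised_below S W"
  using assms unfolding splits_realising_def by blast

lemma realised_below_nonempty:
  assumes "realised_below S W" and "\<alpha> \<in> S" and "\<alpha> \<noteq> ord_zero"
  shows "0 < fst W"
proof -
  obtain A where "rho A = \<alpha>" and "sig_below A W"
    using assms(1,2) unfolding realised_below_def by blast
  then have "fst A \<noteq> 0"
    using rho_empty assms(3) by blast
  then show ?thesis
    using sig_below_empty[OF \<open>sig_below A W\<close>] by (metis neq0_conv)
qed

text \<open>A list \<open>\<gamma>\<close> stands for \<open>\<omega>\<^bsup>\<gamma>\<^sub>0\<^esup> + \<omega>\<^bsup>\<gamma>\<^sub>1\<^esup> + \<dots>\<close>, which is \<open>\<rho>\<close> of \<open>\<Sum> exp Z\<^sub>j\<close> whenever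
  \<open>\<rho> Z\<^sub>j = 1 + \<gamma>\<^sub>j\<close>.\<close>

definition tails_realised_below :: "cnf list set \<Rightarrow> sig \<Rightarrow> bool" where
  "tails_realised_below G W \<longleftrightarrow> (\<forall>\<gamma>\<in>G. \<exists>Zs. (\<forall>Z\<in>set Zs. RR Z) \<and>
     map rho Zs = map ord_one_plus \<gamma> \<and> sig_below (sig_sum (map sig_exp Zs)) W)"

lemma tails_realised_below_sig_copies:
  assumes "realised_below (ord_one_plus ` (\<Union>\<gamma>\<in>G. set \<gamma>)) W" and "finite G"
  shows "tails_realised_below G (sig_copies (Max (length ` G)) (sig_exp W))"
  unfolding tails_realised_below_def
proof
  fix \<gamma>
  assume "\<gamma> \<in> G"
  have "\<forall>a\<in>set \<gamma>. \<exists>A. RR A \<and> rho A = ord_one_plus a \<and> sig_below A W"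
    using assms(1) \<open>\<gamma> \<in> G\<close> unfolding realised_below_def by blast
  from bchoice[OF this] obtain Zf
    where Zf: "\<forall>a\<in>set \<gamma>. RR (Zf a) \<and> rho (Zf a) = ord_one_plus a \<and> sig_below (Zf a) W"
    by blast
  have "length \<gamma> \<le> Max (length ` G)"
    using \<open>finite G\<close> \<open>\<gamma> \<in> G\<close> by simp
  then have "sig_below (sig_sum (map sig_exp (map Zf \<gamma>))) (sig_copies (Max (length ` G)) (sig_exp W))"
    using Zf by (intro sig_sum_exp_below_copies) auto
  moreover have "(\<forall>Z\<in>set (map Zf \<gamma>). RR Z) \<and> map rho (map Zf \<gamma>) = map ord_one_plus \<gamma>"
    using Zf by auto
  ultimately show "\<exists>Zs. (\<forall>Z\<in>set Zs. RR Z) \<and> map rho Zs = map ord_one_plus \<gamma> \<and>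
      sig_below (sig_sum (map sig_exp Zs)) (sig_copies (Max (length ` G)) (sig_exp W))"
    by blast
qed

lemma sig_exp_splits_realising:
  assumes split: "splits_realising Y" and "RR Y" and "0 < fst Y" and "finite G"
    and G: "\<forall>\<gamma>\<in>G. ord_valid (C \<gamma>) \<and> (\<forall>a\<in>set \<gamma>. ord_lt a (ord_minus1 (rho Y)))"
  shows "\<exists>W T. 0 < fst T \<and> sig_below (sig_plus W T) (sig_exp Y) \<and> tails_realised_below G W"
proof (cases "\<forall>\<gamma>\<in>G. \<gamma> = []")
  case True
  then have "tails_realised_below G sig_zero"
    unfolding tails_realised_below_def by (auto intro: exI[of _ "[]"])
  moreover have "sig_below (sig_plus sig_zero (sig_exp Y)) (sig_exp Y)"
    by (simp add: sig_eq_imp_sig_below sig_plus_empty_left)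
  ultimately show ?thesis
    using \<open>0 < fst Y\<close> by (intro exI[of _ sig_zero] exI[of _ "sig_exp Y"]) simp
next
  case False
  define S where "S = ord_one_plus ` (\<Union>\<gamma>\<in>G. set \<gamma>)"
  have "\<forall>\<alpha>\<in>S. ord_valid \<alpha> \<and> ord_lt \<alpha> (rho Y)"
    using G RR_ord_valid[OF \<open>RR Y\<close>] by (auto simp: S_def ord_valid_one_plus ord_one_plus_less)
  moreover have "finite S"
    using \<open>finite G\<close> by (simp add: S_def)
  ultimately obtain W T where "0 < fst T" and WT: "sig_below (sig_plus W T) Y"
    and "realised_below S W"
    using splits_realisingD[OF split _ _ \<open>0 < fst Y\<close>] by metis
  obtain \<gamma> where "\<gamma> \<in> G" and "\<gamma> \<noteq> []"
    using False by blast
  then have "ord_one_plus (hd \<gamma>) \<in> S"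
    unfolding S_def by (meson UN_I hd_in_set imageI)
  then have "0 < fst W"
    using realised_below_nonempty[OF \<open>realised_below S W\<close>] ord_one_plus_nonzero by blast
  have "sig_below (sig_plus (sig_copies (Max (length ` G)) (sig_exp W)) (sig_exp W)) (sig_exp Y)"
    using sig_copies_exp_below_exp_plus[OF \<open>0 < fst T\<close>] sig_exp_mono[OF WT] by (rule sig_below_trans)
  moreover have "tails_realised_below G (sig_copies (Max (length ` G)) (sig_exp W))"
    using \<open>realised_below S W\<close> \<open>finite G\<close> unfolding S_def by (rule tails_realised_below_sig_copies)
  ultimately show ?thesis
    using \<open>0 < fst W\<close> by (intro exI[of _ "sig_copies (Max (length ` G)) (sig_exp W)"] exI[of _ "sig_exp W"]) simp
qed

lemma sorted_rho_ge_take_append: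
  assumes sorted: "sorted_wrt rho_ge Ys" and "k < length Ys" and "sorted_wrt rho_ge Zs"
    and less: "\<forall>Z\<in>set Zs. ord_lt (rho Z) (rho (Ys ! k))"
  shows "sorted_wrt rho_ge (take k Ys @ Zs)"
  unfolding sorted_wrt_append
proof (intro conjI ballI)
  show "sorted_wrt rho_ge (take k Ys)"
    using sorted by (rule sorted_wrt_take)
  fix Y Z
  assume "Y \<in> set (take k Ys)" and "Z \<in> set Zs"
  then obtain j where "j < k" and "Y = Ys ! j"
    using \<open>k < length Ys\<close> by (auto simp: in_set_conv_nth)
  then have "ord_le (rho (Ys ! k)) (rho Y)"
    using sorted_wrt_nth_less[OF sorted, of j k] \<open>k < length Ys\<close> by (simp add: rho_ge_def)
  then show "rho_ge Y Z"
    using less \<open>Z \<in> set Zs\<close> unfolding rho_ge_def by (meson ord_less_le_trans ord_lt_imp_le)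
qed (fact assms)

lemma RR_rho_sum_exp_append:
  assumes Ys: "\<forall>Y\<in>set Ys. RR Y \<and> 0 < fst Y" and sorted: "sorted_wrt rho_ge Ys" and "k < length Ys"
    and Zs: "\<forall>Z\<in>set Zs. RR Z" "map rho Zs = map ord_one_plus \<gamma>"
    and \<gamma>: "ord_valid (C \<gamma>)" "\<forall>a\<in>set \<gamma>. ord_lt a (ord_minus1 (rho (Ys ! k)))"
  shows "RR (sig_sum (map sig_exp (take k Ys @ Zs))) \<and>
    rho (sig_sum (map sig_exp (take k Ys @ Zs))) = C (map (ord_minus1 \<circ> rho) (take k Ys) @ \<gamma>)"
proof -
  have rho_Zs: "rho Z \<in> ord_one_plus ` set \<gamma>" if "Z \<in> set Zs" for Z
  proof -
    have "rho Z \<in> set (map rho Zs)"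
      using that by simp
    then show ?thesis
      using Zs(2) by simp
  qed
  have "ord_valid (rho (Ys ! k))"
    using Ys \<open>k < length Ys\<close> RR_ord_valid by simp
  have "\<forall>Z\<in>set Zs. ord_lt (rho Z) (rho (Ys ! k))"
  proof
    fix Z
    assume "Z \<in> set Zs"
    then obtain a where "a \<in> set \<gamma>" and "rho Z = ord_one_plus a"
      using rho_Zs by blast
    then show "ord_lt (rho Z) (rho (Ys ! k))"
      using \<gamma>(2) ord_one_plus_less \<open>ord_valid (rho (Ys ! k))\<close> by simp
  qed
  then have "sorted_wrt rho_ge (take k Ys @ Zs)"
    using sorted_rho_ge_one_plus[OF Zs(2) \<gamma>(1)] by (intro sorted_rho_ge_take_append[OF sorted \<open>k < length Ys\<close>])
  moreover have "0 < fst Z" if "Z \<in> set Zs" for Z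
  proof -
    have "rho Z \<noteq> ord_zero"
      using rho_Zs[OF that] ord_one_plus_nonzero by (metis imageE)
    then show ?thesis
      using rho_empty by (metis neq0_conv)
  qed
  then have "\<forall>Z\<in>set (take k Ys @ Zs). RR Z \<and> 0 < fst Z"
    using Ys Zs(1) by (auto dest: in_set_takeD)
  moreover have "map (ord_minus1 \<circ> rho) Zs = \<gamma>"
  proof -
    have "map (ord_minus1 \<circ> rho) Zs = map ord_minus1 (map rho Zs)"
      by simp
    also have "\<dots> = \<gamma>"
      unfolding Zs(2) by (simp add: comp_def ord_minus1_one_plus)
    finally show ?thesis .
  qed
  ultimately show ?thesis
    using RR_sum_sorted[of "take k Ys @ Zs"] rho_sum_sorted[of "take k Ys @ Zs"] RR_imp_BB by auto
qed

lemma realised_sum_exp_append: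
  assumes Ys: "\<forall>Y\<in>set Ys. RR Y \<and> 0 < fst Y" and sorted: "sorted_wrt rho_ge Ys" and "k < length Ys"
    and "tails_realised_below G W" and "\<gamma> \<in> G"
    and \<gamma>: "ord_valid (C \<gamma>)" "\<forall>a\<in>set \<gamma>. ord_lt a (ord_minus1 (rho (Ys ! k)))"
  shows "\<exists>A. RR A \<and> rho A = C (map (ord_minus1 \<circ> rho) (take k Ys) @ \<gamma>) \<and>
    sig_below A (sig_plus (sig_sum (map sig_exp (take k Ys))) W)"
proof -
  obtain Zs where Zs: "\<forall>Z\<in>set Zs. RR Z" "map rho Zs = map ord_one_plus \<gamma>"
    and Zs_below: "sig_below (sig_sum (map sig_exp Zs)) W"
    using assms(4,5) unfolding tails_realised_below_def by blast
  have "sig_eq (sig_sum (map sig_exp (take k Ys @ Zs)))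
      (sig_plus (sig_sum (map sig_exp (take k Ys))) (sig_sum (map sig_exp Zs)))"
    by (simp add: sig_sum_append)
  then have "sig_below (sig_sum (map sig_exp (take k Ys @ Zs))) (sig_plus (sig_sum (map sig_exp (take k Ys))) W)"
    using sig_plus_left_mono[OF Zs_below] sig_eq_sig_below_trans by blast
  then show ?thesis
    using RR_rho_sum_exp_append[OF Ys sorted \<open>k < length Ys\<close> Zs \<gamma>] by blast
qed

lemma realised_below_sum_exp:
  assumes Ys: "\<forall>Y\<in>set Ys. RR Y \<and> 0 < fst Y" and sorted: "sorted_wrt rho_ge Ys" and K: "Suc K = length Ys"
    and S: "\<forall>\<alpha>\<in>S. ord_valid \<alpha> \<and> ord_lt \<alpha> (C (map (ord_minus1 \<circ> rho) Ys))"
    and W: "\<And>k. k < length Ys \<Longrightarrow> sig_below (W k) (sig_exp (Ys ! k)) \<and> tails_realised_below (G k) (W k)"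
    and G: "\<And>k \<gamma>. k < length Ys \<Longrightarrow> C (take k (map (ord_minus1 \<circ> rho) Ys) @ \<gamma>) \<in> S \<Longrightarrow>
      ord_valid (C \<gamma>) \<Longrightarrow> \<forall>a\<in>set \<gamma>. ord_lt a (ord_minus1 (rho (Ys ! k))) \<Longrightarrow> \<gamma> \<in> G k"
  shows "realised_below S (sig_plus (sig_sum (map sig_exp (take K Ys))) (W K))"
  unfolding realised_below_def
proof
  fix \<alpha>
  assume "\<alpha> \<in> S"
  define cs where "cs = map (ord_minus1 \<circ> rho) Ys"
  obtain k \<gamma> where "k < length cs" and \<alpha>: "\<alpha> = C (take k cs @ \<gamma>)" and "ord_valid (C \<gamma>)"
    and \<gamma>_less: "\<forall>a\<in>set \<gamma>. ord_lt a (cs ! k)"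
    using S \<open>\<alpha> \<in> S\<close> ord_lt_C_decomp unfolding cs_def by blast
  then have "k < length Ys" and "\<forall>a\<in>set \<gamma>. ord_lt a (ord_minus1 (rho (Ys ! k)))"
    by (simp_all add: cs_def)
  moreover have "\<gamma> \<in> G k"
    using G \<open>\<alpha> \<in> S\<close> \<alpha> \<open>ord_valid (C \<gamma>)\<close> calculation unfolding cs_def by blast
  ultimately obtain A where "RR A" and rho_A: "rho A = C (map (ord_minus1 \<circ> rho) (take k Ys) @ \<gamma>)"
    and "sig_below A (sig_plus (sig_sum (map sig_exp (take k Ys))) (W k))"
    using realised_sum_exp_append[OF Ys sorted _ _ _ \<open>ord_valid (C \<gamma>)\<close>] W by blast
  moreover have "rho A = \<alpha>"
    unfolding rho_A \<alpha> by (simp add: cs_def take_map)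
  moreover have "sig_below (sig_plus (sig_sum (map sig_exp (take k Ys))) (W k))
      (sig_plus (sig_sum (map sig_exp (take K Ys))) (W K))"
    unfolding take_map[symmetric] using W \<open>k < length Ys\<close> K by (intro sig_sum_take_plus_mono) auto
  ultimately show "\<exists>A. RR A \<and> rho A = \<alpha> \<and>
      sig_below A (sig_plus (sig_sum (map sig_exp (take K Ys))) (W K))"
    using sig_below_trans by blast
qed

lemma sig_sum_exp_splits_realising:
  assumes Ys: "\<forall>Y\<in>set Ys. RR Y \<and> splits_realising Y \<and> 0 < fst Y" and sorted: "sorted_wrt rho_ge Ys"
  shows "splits_realising (sig_sum (map sig_exp Ys))"
  unfolding splits_realising_def
proof (intro allI impI)
  fix S
  assume "finite S" and S: "\<forall>\<alpha>\<in>S. ord_valid \<alpha> \<and> ord_lt \<alpha> (rho (sig_sum (map sig_exp Ys)))"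
    and "0 < fst (sig_sum (map sig_exp Ys))"
  define cs where "cs = map (ord_minus1 \<circ> rho) Ys"
  define G where "G k = {\<gamma>. C (take k cs @ \<gamma>) \<in> S \<and> ord_valid (C \<gamma>) \<and>
    (\<forall>a\<in>set \<gamma>. ord_lt a (ord_minus1 (rho (Ys ! k))))}" for k
  have "\<exists>W T. 0 < fst T \<and> sig_below (sig_plus W T) (sig_exp (Ys ! k)) \<and> tails_realised_below (G k) W"
    if "k < length Ys" for k
  proof (rule sig_exp_splits_realising)
    show "splits_realising (Ys ! k)" "RR (Ys ! k)" "0 < fst (Ys ! k)"
      using Ys that by auto
    have "G k \<subseteq> (\<lambda>\<gamma>. C (take k cs @ \<gamma>)) -` S"
      by (auto simp: G_def)
    then show "finite (G k)"
      using finite_vimageI[OF \<open>finite S\<close>, of "\<lambda>\<gamma>. C (take k cs @ \<gamma>)"] finite_subset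
      by (auto intro: injI)
    show "\<forall>\<gamma>\<in>G k. ord_valid (C \<gamma>) \<and> (\<forall>a\<in>set \<gamma>. ord_lt a (ord_minus1 (rho (Ys ! k))))"
      by (simp add: G_def)
  qed
  then obtain Wf Tf where WT: "\<And>k. k < length Ys \<Longrightarrow> 0 < fst (Tf k) \<and>
      sig_below (sig_plus (Wf k) (Tf k)) (sig_exp (Ys ! k)) \<and> tails_realised_below (G k) (Wf k)"
    by metis
  obtain K where K: "Suc K = length Ys"
    using \<open>0 < fst (sig_sum (map sig_exp Ys))\<close> by (cases Ys rule: rev_cases) auto
  define P where "P = sig_sum (map sig_exp (take K Ys))"
  define R where "R = sig_sum (drop (Suc K) (map sig_exp Ys))"
  have "sig_below (sig_plus (sig_plus P (Wf K)) (sig_plus (Tf K) R)) (sig_sum (map sig_exp Ys))"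
    unfolding P_def R_def take_map[symmetric] using WT[of K] K by (intro sig_sum_split_below) auto
  moreover have "realised_below S (sig_plus P (Wf K))"
    unfolding P_def
  proof (rule realised_below_sum_exp[OF _ sorted K])
    show "\<forall>Y\<in>set Ys. RR Y \<and> 0 < fst Y"
      using Ys by blast
    have "rho (sig_sum (map sig_exp Ys)) = C cs"
      unfolding cs_def using rho_sum_sorted sorted Ys RR_imp_BB by blast
    with S show "\<forall>\<alpha>\<in>S. ord_valid \<alpha> \<and> ord_lt \<alpha> (C (map (ord_minus1 \<circ> rho) Ys))"
      by (simp add: cs_def)
    show "sig_below (Wf k) (sig_exp (Ys ! k)) \<and> tails_realised_below (G k) (Wf k)"
      if "k < length Ys" for k
      using WT[OF that] sig_below_plus_self sig_below_trans by blast
  qed (simp add: G_def cs_def)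
  moreover have "0 < fst (sig_plus (Tf K) R)"
    using WT[of K] K by simp
  ultimately show "\<exists>W T. 0 < fst T \<and> sig_below (sig_plus W T) (sig_sum (map sig_exp Ys)) \<and> realised_below S W"
    by blast
qed

lemma RR_splits_realising: "RR X \<Longrightarrow> splits_realising X"
proof (induct rule: RR.induct)
  case (RR_zero X)
  then show ?case
    by (simp add: splits_realising_def sig_eq_zero_iff)
next
  case (RR_one X)
  then have "rho X = C [C []]"
    by (simp add: sig_eq_one_iff rho_singleton ord_one_def)
  have "\<alpha> = rho sig_zero" if "ord_lt \<alpha> (rho X)" for \<alpha>
  proof (cases \<alpha>)
    case (C as)
    with that \<open>rho X = C [C []]\<close> have "as = []"
      using ord_lt_C_lex[of as "[C []]"] by auto
    then show ?thesis
      using C by (simp add: rho_empty ord_zero_def)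
  qed
  then have "realised_below S sig_zero" if "\<forall>\<alpha>\<in>S. ord_lt \<alpha> (rho X)" for S
    using that RR.RR_zero[of sig_zero] sig_below_refl unfolding realised_below_def by fastforce
  moreover have "sig_below (sig_plus sig_zero X) X"
    by (simp add: sig_eq_imp_sig_below sig_plus_empty_left)
  ultimately show ?case
    unfolding splits_realising_def by blast
next
  case (RR_sum Xs X)
  define Ys where "Ys = filter (\<lambda>A. 0 < fst A) Xs"
  have "\<forall>Y\<in>set Ys. RR Y \<and> splits_realising Y \<and> 0 < fst Y"
    using RR_sum(1) by (auto simp: Ys_def in_set_conv_nth)
  moreover have "sorted_wrt rho_ge Ys"
    unfolding Ys_def by (rule sorted_rho_ge_filter[OF RR_sum(2)])
  ultimately have "splits_realising (sig_sum (map sig_exp Ys))"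
    by (rule sig_sum_exp_splits_realising)
  moreover have "sig_eq (sig_sum (map sig_exp Ys)) X"
    unfolding Ys_def using RR_sum(3) sig_sum_exp_filter_nonempty sig_eq_sym sig_eq_trans by blast
  ultimately show ?case
    using \<open>\<forall>Y\<in>set Ys. RR Y \<and> splits_realising Y \<and> 0 < fst Y\<close> \<open>sorted_wrt rho_ge Ys\<close>
    by (metis RR_sum_sorted RR_imp_BB splits_realising_cong)
qed

theorem lemma8p4:
  assumes "RR B" and "ord_valid \<alpha>" and "ord_lt \<alpha> (rho B)"
  shows "\<exists>A. RR A \<and> sig_le A B \<and> rho A = \<alpha>"
proof -
  have "0 < fst B"
    using assms(3) rho_empty by (metis neq0_conv ord_zero_def not_ord_lt_Nil)
  then obtain W T where "sig_below (sig_plus W T) B" and "realised_below {\<alpha>} W"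
    using RR_splits_realising[OF assms(1)] assms(2,3) unfolding splits_realising_def by blast
  then obtain A where "RR A" "rho A = \<alpha>" and "sig_below A B"
    unfolding realised_below_def using sig_below_plus_self sig_below_trans by blast
  then show ?thesis
    using sig_below_imp_sig_le \<open>0 < fst B\<close> by blast
qed

end
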